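(* A forest algebra $\mathcal F$ (finite or infinite) is 2-distributive if and only if it divides a wreath product $\mathcal G_1\wr\mathcal G_2$ of two (possibly infinite) distributive forest algebras $\mathcal G_1,\mathcal G_2$.
   Context: A forest algebra is a pair $(H,V)$ where $H$ is a monoid written additively, $V$ is a monoid written multiplicatively, and $V$ acts faithfully on $H$. For each $h$ there is $I_h\in V$ with $I_h h'=h+h'$, and each $h$ is of the form $v\cdot 0_H$. All forest algebras are horizontally commutative and idempotent. Morphisms preserve the monoid operations, the action and $h\mapsto I_h$. A subalgebra is a pair of subsets closed under all forest algebra operations. A congruence is a pair of equivalence relations on $H$ and $V$ compatible with all operations, and the quotient is formed from the equivalence classes. $(H,V)$ divides $(H',V')$, written $(H,V)\prec(H',V')$, if $(H,V)$ is a quotient of a subalgebra of $(H',V')$. The free forest algebra $\Sigma^\Delta=(H_\Sigma,V_\Sigma)$ has as forest part the finite sets of unordered trees $\alpha[C]$ (with $\alpha\in\Sigma$ and $C$ a finite set of trees), under union. Its contexts are forests with one leaf replaced by a hole. $\pi(f)$ is the prefix-closed set of root-starting label paths of a forest $f$. $(H,V)$ is distributive if $v(h_1+h_2)=vh_1+vh_2$ for all $v,h_1,h_2$. It is 2-distributive if for every finite alphabet $\Sigma$, every morphism $\phi:\Sigma^\Delta\to(H,V)$, every context $v$, and all forests $f_1,f_2$ with $\pi(f_1)=\pi(f_2)$, we have $\phi(v(f_1+f_2))=\phi(vf_1+vf_2)$. Wreath product: $(H_1,V_1)\wr(H_2,V_2)=(H_1\times H_2,\ V_1^{H_2}\times V_2)$.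 The action is $(f,v)(h_1,h_2)=(f(h_2)h_1,\ vh_2)$. Multiplication is $(f,v)(f',v')=(f'',vv')$ with $f''(h)=f(v'h)\cdot f'(h)$. *)

theory Defs
  imports Main "HOL-Library.FSet" "HOL-Library.FuncSet"
begin

record ('h, 'v) falg =
  Hc   :: "'h set"
  Vc   :: "'v set"
  hadd :: "'h \<Rightarrow> 'h \<Rightarrow> 'h"
  hzero :: "'h"
  vmul :: "'v \<Rightarrow> 'v \<Rightarrow> 'v"
  vone :: "'v"
  act  :: "'v \<Rightarrow> 'h \<Rightarrow> 'h"
  ins  :: "'h \<Rightarrow> 'v"

definition forest_algebra :: "('h, 'v, 'z) falg_scheme \<Rightarrow> bool" where
  "forest_algebra A \<longleftrightarrow>
     hzero A \<in> Hc A \<and> vone A \<in> Vc A \<and>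
     (\<forall>h\<in>Hc A. \<forall>h'\<in>Hc A. hadd A h h' \<in> Hc A) \<and>
     (\<forall>v\<in>Vc A. \<forall>w\<in>Vc A. vmul A v w \<in> Vc A) \<and>
     (\<forall>v\<in>Vc A. \<forall>h\<in>Hc A. act A v h \<in> Hc A) \<and>
     (\<forall>h\<in>Hc A. ins A h \<in> Vc A) \<and>
     \<comment> \<open>H is a monoid, horizontally commutative and idempotent\<close>
     (\<forall>a\<in>Hc A. \<forall>b\<in>Hc A. \<forall>c\<in>Hc A. hadd A (hadd A a b) c = hadd A a (hadd A b c)) \<and>
     (\<forall>a\<in>Hc A. hadd A (hzero A) a = a \<and> hadd A a (hzero A) = a) \<and>
     (\<forall>a\<in>Hc A. \<forall>b\<in>Hc A. hadd A a b = hadd A b a) \<and>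
     (\<forall>a\<in>Hc A. hadd A a a = a) \<and>
     \<comment> \<open>V is a monoid\<close>
     (\<forall>a\<in>Vc A. \<forall>b\<in>Vc A. \<forall>c\<in>Vc A. vmul A (vmul A a b) c = vmul A a (vmul A b c)) \<and>
     (\<forall>a\<in>Vc A. vmul A (vone A) a = a \<and> vmul A a (vone A) = a) \<and>
     \<comment> \<open>V acts on H (monoid action), faithfully\<close>
     (\<forall>v\<in>Vc A. \<forall>w\<in>Vc A. \<forall>h\<in>Hc A. act A (vmul A v w) h = act A v (act A w h)) \<and>
     (\<forall>h\<in>Hc A. act A (vone A) h = h) \<and>
     (\<forall>v\<in>Vc A. \<forall>w\<in>Vc A. (\<forall>h\<in>Hc A. act A v h = act A w h) \<longrightarrow> v = w) \<and>
     \<comment> \<open>I_h h' = h + h'\<close>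
     (\<forall>h\<in>Hc A. \<forall>h'\<in>Hc A. act A (ins A h) h' = hadd A h h') \<and>
     \<comment> \<open>every h is of the form v 0\<close>
     (\<forall>h\<in>Hc A. \<exists>v\<in>Vc A. h = act A v (hzero A))"

definition morphism ::
  "('h, 'v, 'z) falg_scheme \<Rightarrow> ('h2, 'v2, 'z2) falg_scheme \<Rightarrow> ('h \<Rightarrow> 'h2) \<Rightarrow> ('v \<Rightarrow> 'v2) \<Rightarrow> bool" where
  "morphism A B \<phi> \<psi> \<longleftrightarrow>
     (\<forall>h\<in>Hc A. \<phi> h \<in> Hc B) \<and> (\<forall>v\<in>Vc A. \<psi> v \<in> Vc B) \<and>
     \<phi> (hzero A) = hzero B \<and>
     (\<forall>h\<in>Hc A. \<forall>h'\<in>Hc A. \<phi> (hadd A h h') = hadd B (\<phi> h) (\<phi> h')) \<and>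
     \<psi> (vone A) = vone B \<and>
     (\<forall>v\<in>Vc A. \<forall>w\<in>Vc A. \<psi> (vmul A v w) = vmul B (\<psi> v) (\<psi> w)) \<and>
     (\<forall>v\<in>Vc A. \<forall>h\<in>Hc A. \<phi> (act A v h) = act B (\<psi> v) (\<phi> h)) \<and>
     (\<forall>h\<in>Hc A. \<psi> (ins A h) = ins B (\<phi> h))"

definition isomorphism ::
  "('h, 'v, 'z) falg_scheme \<Rightarrow> ('h2, 'v2, 'z2) falg_scheme \<Rightarrow> ('h \<Rightarrow> 'h2) \<Rightarrow> ('v \<Rightarrow> 'v2) \<Rightarrow> bool" where
  "isomorphism A B \<phi> \<psi> \<longleftrightarrow>
     morphism A B \<phi> \<psi> \<and> bij_betw \<phi> (Hc A) (Hc B) \<and> bij_betw \<psi> (Vc A) (Vc B)"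

definition is_subalgebra :: "('h, 'v, 'z) falg_scheme \<Rightarrow> 'h set \<Rightarrow> 'v set \<Rightarrow> bool" where
  "is_subalgebra A H V \<longleftrightarrow>
     H \<subseteq> Hc A \<and> V \<subseteq> Vc A \<and>
     hzero A \<in> H \<and> vone A \<in> V \<and>
     (\<forall>h\<in>H. \<forall>h'\<in>H. hadd A h h' \<in> H) \<and>
     (\<forall>v\<in>V. \<forall>w\<in>V. vmul A v w \<in> V) \<and>
     (\<forall>v\<in>V. \<forall>h\<in>H. act A v h \<in> H) \<and>
     (\<forall>h\<in>H. ins A h \<in> V)"

definition restrict_alg :: "('h, 'v, 'z) falg_scheme \<Rightarrow> 'h set \<Rightarrow> 'v set \<Rightarrow> ('h, 'v) falg" where
  "restrict_alg A H V =
     \<lparr> Hc = H, Vc = V, hadd = hadd A, hzero = hzero A, vmul = vmul A, vone = vone A,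
       act = act A, ins = ins A \<rparr>"

definition congruence :: "('h, 'v, 'z) falg_scheme \<Rightarrow> 'h rel \<Rightarrow> 'v rel \<Rightarrow> bool" where
  "congruence A R S \<longleftrightarrow>
     equiv (Hc A) R \<and> equiv (Vc A) S \<and>
     (\<forall>h1 h2 h1' h2'. (h1, h1') \<in> R \<and> (h2, h2') \<in> R \<longrightarrow> (hadd A h1 h2, hadd A h1' h2') \<in> R) \<and>
     (\<forall>v1 v2 v1' v2'. (v1, v1') \<in> S \<and> (v2, v2') \<in> S \<longrightarrow> (vmul A v1 v2, vmul A v1' v2') \<in> S) \<and>
     (\<forall>v v' h h'. (v, v') \<in> S \<and> (h, h') \<in> R \<longrightarrow> (act A v h, act A v' h') \<in> R) \<and>
     (\<forall>h h'. (h, h') \<in> R \<longrightarrow> (ins A h, ins A h') \<in> S)"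

text \<open>Quotient: carriers are the equivalence classes; operations act on representatives
  (well defined for a congruence; we take the union over all representatives).\<close>
definition quotient_alg :: "('h, 'v, 'z) falg_scheme \<Rightarrow> 'h rel \<Rightarrow> 'v rel \<Rightarrow> ('h set, 'v set) falg" where
  "quotient_alg A R S =
     \<lparr> Hc = Hc A // R, Vc = Vc A // S,
       hadd = (\<lambda>X Y. \<Union>{R `` {hadd A x y} | x y. x \<in> X \<and> y \<in> Y}),
       hzero = R `` {hzero A},
       vmul = (\<lambda>X Y. \<Union>{S `` {vmul A x y} | x y. x \<in> X \<and> y \<in> Y}),
       vone = S `` {vone A},
       act = (\<lambda>X Y. \<Union>{R `` {act A x y} | x y. x \<in> X \<and> y \<in> Y}),
       ins = (\<lambda>Y. \<Union>{S `` {ins A y} | y. y \<in> Y}) \<rparr>"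

definition divides :: "('h, 'v, 'z) falg_scheme \<Rightarrow> ('h2, 'v2, 'z2) falg_scheme \<Rightarrow> bool" where
  "divides F G \<longleftrightarrow>
     (\<exists>H V R S \<phi> \<psi>. is_subalgebra G H V \<and> congruence (restrict_alg G H V) R S \<and>
        isomorphism (quotient_alg (restrict_alg G H V) R S) F \<phi> \<psi>)"

definition distributive :: "('h, 'v, 'z) falg_scheme \<Rightarrow> bool" where
  "distributive A \<longleftrightarrow>
     (\<forall>v\<in>Vc A. \<forall>h1\<in>Hc A. \<forall>h2\<in>Hc A.
        act A v (hadd A h1 h2) = hadd A (act A v h1) (act A v h2))"

definition wreath ::
  "('h1, 'v1, 'z1) falg_scheme \<Rightarrow> ('h2, 'v2, 'z2) falg_scheme \<Rightarrow>
   ('h1 \<times> 'h2, ('h2 \<Rightarrow> 'v1) \<times> 'v2) falg" where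
  "wreath G1 G2 =
     \<lparr> Hc = Hc G1 \<times> Hc G2,
       Vc = (Hc G2 \<rightarrow>\<^sub>E Vc G1) \<times> Vc G2,
       hadd = (\<lambda>(a1, a2) (b1, b2). (hadd G1 a1 b1, hadd G2 a2 b2)),
       hzero = (hzero G1, hzero G2),
       vmul = (\<lambda>(f, v) (f', v'). (\<lambda>h\<in>Hc G2. vmul G1 (f (act G2 v' h)) (f' h), vmul G2 v v')),
       vone = (\<lambda>h\<in>Hc G2. vone G1, vone G2),
       act = (\<lambda>(f, v) (h1, h2). (act G1 (f h2) h1, act G2 v h2)),
       ins = (\<lambda>(h1, h2). (\<lambda>h\<in>Hc G2. ins G1 h1, ins G2 h2)) \<rparr>"

datatype 'a tree = Node 'a "'a tree fset"

type_synonym 'a forest = "'a tree fset"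

text \<open>Contexts: a forest with exactly one leaf replaced by a hole. Canonical form:
  \<open>CHole F\<close> is the context \<open>F + \<box>\<close>, and \<open>CNode F a c\<close> is \<open>F + a[c]\<close>.\<close>
datatype 'a ctx = CHole "'a forest" | CNode "'a forest" 'a "'a ctx"

primrec tlabels :: "'a tree \<Rightarrow> 'a set" where
  "tlabels (Node a C) = insert a (\<Union> (fset (fimage tlabels C)))"

definition flabels :: "'a forest \<Rightarrow> 'a set" where
  "flabels f = \<Union> (tlabels ` fset f)"

primrec clabels :: "'a ctx \<Rightarrow> 'a set" where
  "clabels (CHole F) = flabels F"
| "clabels (CNode F a c) = flabels F \<union> insert a (clabels c)"

primrec fill :: "'a ctx \<Rightarrow> 'a forest \<Rightarrow> 'a forest" where
  "fill (CHole F) f = F |\<union>| f"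
| "fill (CNode F a c) f = F |\<union>| {|Node a (fill c f)|}"

primrec cadd :: "'a forest \<Rightarrow> 'a ctx \<Rightarrow> 'a ctx" where
  "cadd F (CHole G) = CHole (F |\<union>| G)"
| "cadd F (CNode G a c) = CNode (F |\<union>| G) a c"

primrec ccomp :: "'a ctx \<Rightarrow> 'a ctx \<Rightarrow> 'a ctx" where
  "ccomp (CHole F) w = cadd F w"
| "ccomp (CNode F a c) w = CNode F a (ccomp c w)"

definition free_falg :: "'a set \<Rightarrow> ('a forest, 'a ctx) falg" where
  "free_falg \<Sigma> =
     \<lparr> Hc = {f. flabels f \<subseteq> \<Sigma>}, Vc = {c. clabels c \<subseteq> \<Sigma>},
       hadd = (|\<union>|), hzero = {||}, vmul = ccomp, vone = CHole {||},
       act = fill, ins = CHole \<rparr>"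

primrec tpaths :: "'a tree \<Rightarrow> 'a list set" where
  "tpaths (Node a C) = insert [a] ((\<lambda>p. a # p) ` \<Union> (fset (fimage tpaths C)))"

definition paths :: "'a forest \<Rightarrow> 'a list set" where
  "paths f = \<Union> (tpaths ` fset f)"

text \<open>Finite alphabets are taken as finite subsets of nat (every finite alphabet is
  in bijection with one).\<close>
definition two_distributive :: "('h, 'v, 'z) falg_scheme \<Rightarrow> bool" where
  "two_distributive A \<longleftrightarrow>
     (\<forall>\<Sigma> :: nat set. finite \<Sigma> \<longrightarrow>
       (\<forall>\<phi> \<psi>. morphism (free_falg \<Sigma>) A \<phi> \<psi> \<longrightarrow>
         (\<forall>v\<in>Vc (free_falg \<Sigma>). \<forall>f1\<in>Hc (free_falg \<Sigma>). \<forall>f2\<in>Hc (free_falg \<Sigma>).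
            paths f1 = paths f2 \<longrightarrow>
            \<phi> (fill v (f1 |\<union>| f2)) = \<phi> (fill v f1 |\<union>| fill v f2))))"

end

theory Submission
  imports Defs
begin

text \<open>
  In a wreath product of distributive forest algebras, distributivity of the second factor makes
  its component of a forest depend only on the set of root paths. A letter therefore distributes
  over sums of forests with equal path sets: on the first component because the first factor is
  distributive, on the second because the components agree and addition is idempotent. This is
  two-distributivity, and it passes to divisors.

  Conversely, in a two-distributive algebra a letter distributes over sums of forests with equal
  path sets. Merging sibling subtrees with the same label and the same path set of children then
  shows that the value of a forest only depends on its root paths in which every node is labelled
  by the path set of its children. These labelled paths are computed by a wreath product of two
  free distributive algebras of path sets, the second factor supplying the path sets of children
  to the first, so the algebra is a quotient of a subalgebra of that wreath product. Serialising
  finite sets of words injectively into lists over \<open>'h + 'v\<close> puts both factors into the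
  required type.
\<close>

locale forest_alg =
  fixes A :: "('h, 'v, 'z) falg_scheme"
  assumes forest_algebra: "forest_algebra A"
begin

lemma hzero_closed [simp]: "hzero A \<in> Hc A"
  and vone_closed [simp]: "vone A \<in> Vc A"
  and hadd_closed [simp]: "h \<in> Hc A \<Longrightarrow> h' \<in> Hc A \<Longrightarrow> hadd A h h' \<in> Hc A"
  and vmul_closed [simp]: "v \<in> Vc A \<Longrightarrow> w \<in> Vc A \<Longrightarrow> vmul A v w \<in> Vc A"
  and act_closed [simp]: "v \<in> Vc A \<Longrightarrow> h \<in> Hc A \<Longrightarrow> act A v h \<in> Hc A"
  and ins_closed [simp]: "h \<in> Hc A \<Longrightarrow> ins A h \<in> Vc A"
  using forest_algebra unfolding forest_algebra_def by auto

lemma hadd_assoc: "a \<in> Hc A \<Longrightarrow> b \<in> Hc A \<Longrightarrow> c \<in> Hc A \<Longrightarrow>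
    hadd A (hadd A a b) c = hadd A a (hadd A b c)"
  and hadd_zero_left [simp]: "a \<in> Hc A \<Longrightarrow> hadd A (hzero A) a = a"
  and hadd_zero_right [simp]: "a \<in> Hc A \<Longrightarrow> hadd A a (hzero A) = a"
  and hadd_commute: "a \<in> Hc A \<Longrightarrow> b \<in> Hc A \<Longrightarrow> hadd A a b = hadd A b a"
  and hadd_idem [simp]: "a \<in> Hc A \<Longrightarrow> hadd A a a = a"
  and vmul_assoc: "u \<in> Vc A \<Longrightarrow> v \<in> Vc A \<Longrightarrow> w \<in> Vc A \<Longrightarrow>
    vmul A (vmul A u v) w = vmul A u (vmul A v w)"
  and vmul_one_left [simp]: "v \<in> Vc A \<Longrightarrow> vmul A (vone A) v = v"
  and vmul_one_right [simp]: "v \<in> Vc A \<Longrightarrow> vmul A v (vone A) = v"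
  and act_vmul: "v \<in> Vc A \<Longrightarrow> w \<in> Vc A \<Longrightarrow> h \<in> Hc A \<Longrightarrow>
    act A (vmul A v w) h = act A v (act A w h)"
  and act_one [simp]: "h \<in> Hc A \<Longrightarrow> act A (vone A) h = h"
  and act_ins: "h \<in> Hc A \<Longrightarrow> h' \<in> Hc A \<Longrightarrow> act A (ins A h) h' = hadd A h h'"
  and exists_act_hzero: "h \<in> Hc A \<Longrightarrow> \<exists>v\<in>Vc A. h = act A v (hzero A)"
  using forest_algebra unfolding forest_algebra_def by auto

lemma act_faithful:
  assumes "v \<in> Vc A" "w \<in> Vc A" "\<And>h. h \<in> Hc A \<Longrightarrow> act A v h = act A w h"
  shows "v = w"
proof -
  have "\<forall>v\<in>Vc A. \<forall>w\<in>Vc A. (\<forall>h\<in>Hc A. act A v h = act A w h) \<longrightarrow> v = w"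
    using forest_algebra unfolding forest_algebra_def by blast
  with assms show ?thesis by blast
qed

lemma hadd_left_commute: "a \<in> Hc A \<Longrightarrow> b \<in> Hc A \<Longrightarrow> c \<in> Hc A \<Longrightarrow>
    hadd A a (hadd A b c) = hadd A b (hadd A a c)"
  by (metis hadd_assoc hadd_commute)

lemma hadd_left_idem: "a \<in> Hc A \<Longrightarrow> b \<in> Hc A \<Longrightarrow> hadd A a (hadd A a b) = hadd A a b"
  by (metis hadd_assoc hadd_idem)

lemma ins_hzero: "ins A (hzero A) = vone A"
  by (rule act_faithful) (auto simp: act_ins)

lemma ins_hadd: "h \<in> Hc A \<Longrightarrow> h' \<in> Hc A \<Longrightarrow> ins A (hadd A h h') = vmul A (ins A h) (ins A h')"
  by (rule act_faithful) (auto simp: act_ins act_vmul hadd_assoc)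

lemma is_subalgebra_carrier: "is_subalgebra A (Hc A) (Vc A)"
  by (simp add: is_subalgebra_def)

end

text \<open>The guard makes the folded function commute also outside the carrier.\<close>
definition hsum :: "('h, 'v, 'z) falg_scheme \<Rightarrow> 'h set \<Rightarrow> 'h" where
  "hsum A = Finite_Set.fold (\<lambda>x s. if x \<in> Hc A \<and> s \<in> Hc A then hadd A x s else s) (hzero A)"

lemma hsum_empty [simp]: "hsum A {} = hzero A"
  by (simp add: hsum_def)

context forest_alg
begin

lemma comp_fun_idem_on_hadd:
  "comp_fun_idem_on (Hc A) (\<lambda>x s. if x \<in> Hc A \<and> s \<in> Hc A then hadd A x s else s)"
  by unfold_locales (auto simp: fun_eq_iff hadd_left_commute hadd_left_idem)

lemma hsum_closed: "finite X \<Longrightarrow> X \<subseteq> Hc A \<Longrightarrow> hsum A X \<in> Hc A"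
proof (induction X rule: finite_induct)
  case (insert x X)
  interpret comp_fun_idem_on "Hc A" "\<lambda>x s. if x \<in> Hc A \<and> s \<in> Hc A then hadd A x s else s"
    by (rule comp_fun_idem_on_hadd)
  show ?case using insert by (simp add: hsum_def)
qed simp

lemma hsum_insert:
  assumes "finite X" "X \<subseteq> Hc A" "x \<in> Hc A"
  shows "hsum A (insert x X) = hadd A x (hsum A X)"
proof -
  interpret comp_fun_idem_on "Hc A" "\<lambda>x s. if x \<in> Hc A \<and> s \<in> Hc A then hadd A x s else s"
    by (rule comp_fun_idem_on_hadd)
  show ?thesis
    using assms hsum_closed[OF assms(1,2)] by (simp add: hsum_def fold_insert_idem)
qed

lemma hsum_union: "finite X \<Longrightarrow> X \<subseteq> Hc A \<Longrightarrow> finite Y \<Longrightarrow> Y \<subseteq> Hc A \<Longrightarrow>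
    hsum A (X \<union> Y) = hadd A (hsum A X) (hsum A Y)"
  by (induction X rule: finite_induct) (simp_all add: hsum_closed hsum_insert hadd_assoc)

lemma hsum_singleton [simp]: "x \<in> Hc A \<Longrightarrow> hsum A {x} = x"
  using hsum_insert[of "{}" x] by simp

end

section \<open>Evaluation of forests and contexts\<close>

lemma flabels_empty [simp]: "flabels {||} = {}"
  and flabels_union [simp]: "flabels (f |\<union>| g) = flabels f \<union> flabels g"
  and flabels_finsert [simp]: "flabels (finsert t f) = tlabels t \<union> flabels f"
  and tlabels_Node [simp]: "tlabels (Node a C) = insert a (flabels C)"
  by (auto simp: flabels_def)

declare tlabels.simps [simp del]

lemma tlabels_subset_flabels: "t |\<in>| f \<Longrightarrow> tlabels t \<subseteq> flabels f"
  by (auto simp: flabels_def)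

lemma flabels_mono: "f |\<subseteq>| g \<Longrightarrow> flabels f \<subseteq> flabels g"
  by (auto simp: flabels_def)

lemma finite_flabels: "finite (flabels f)"
proof -
  have "finite (tlabels t)" for t
    by (induction t) (auto simp: flabels_def)
  then show ?thesis by (auto simp: flabels_def)
qed

lemma clabels_cadd [simp]: "clabels (cadd F c) = flabels F \<union> clabels c"
  by (cases c) auto

lemma clabels_ccomp [simp]: "clabels (ccomp c d) = clabels c \<union> clabels d"
  by (induction c) auto

lemma flabels_fill [simp]: "flabels (fill c f) = clabels c \<union> flabels f"
  by (induction c) auto

definition letter :: "'a \<Rightarrow> 'a ctx" where
  "letter a = CNode {||} a (CHole {||})"

lemma fill_letter [simp]: "fill (letter a) f = {|Node a f|}"
  and clabels_letter [simp]: "clabels (letter a) = {a}"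
  by (simp_all add: letter_def)

lemma forest_induct [case_names empty insert Node]:
  assumes "P {||}"
    and "\<And>t f. P {|t|} \<Longrightarrow> P f \<Longrightarrow> P (finsert t f)"
    and "\<And>a C. P C \<Longrightarrow> P {|Node a C|}"
  shows "P f"
proof -
  have "P {|t|}" for t
  proof (induction t)
    case (Node a C)
    have "P C'" if "C' |\<subseteq>| C" for C'
      using that by (induction C' rule: fset_induct) (use assms Node.IH in auto)
    then show ?case using assms(3) by blast
  qed
  then show ?thesis
    by (induction f rule: fset_induct) (use assms in auto)
qed

primrec eval_tree :: "('h, 'v, 'z) falg_scheme \<Rightarrow> ('a \<Rightarrow> 'v) \<Rightarrow> 'a tree \<Rightarrow> 'h" where
  "eval_tree A \<sigma> (Node a C) = act A (\<sigma> a) (hsum A (fset (fimage (eval_tree A \<sigma>) C)))"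

definition eval_forest :: "('h, 'v, 'z) falg_scheme \<Rightarrow> ('a \<Rightarrow> 'v) \<Rightarrow> 'a forest \<Rightarrow> 'h" where
  "eval_forest A \<sigma> f = hsum A (eval_tree A \<sigma> ` fset f)"

primrec eval_ctx :: "('h, 'v, 'z) falg_scheme \<Rightarrow> ('a \<Rightarrow> 'v) \<Rightarrow> 'a ctx \<Rightarrow> 'v" where
  "eval_ctx A \<sigma> (CHole F) = ins A (eval_forest A \<sigma> F)"
| "eval_ctx A \<sigma> (CNode F a c) =
     vmul A (ins A (eval_forest A \<sigma> F)) (vmul A (\<sigma> a) (eval_ctx A \<sigma> c))"

lemma eval_tree_Node: "eval_tree A \<sigma> (Node a C) = act A (\<sigma> a) (eval_forest A \<sigma> C)"
  by (simp add: eval_forest_def fimage.rep_eq)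

declare eval_tree.simps [simp del]

lemma eval_forest_empty [simp]: "eval_forest A \<sigma> {||} = hzero A"
  by (simp add: eval_forest_def)

locale forest_eval = forest_alg A for A :: "('h, 'v, 'z) falg_scheme" +
  fixes \<Sigma> :: "'a set" and \<sigma> :: "'a \<Rightarrow> 'v"
  assumes valuation_closed: "\<sigma> ` \<Sigma> \<subseteq> Vc A"
begin

lemma valuation_in_Vc [simp]: "a \<in> \<Sigma> \<Longrightarrow> \<sigma> a \<in> Vc A"
  using valuation_closed by auto

lemma eval_tree_closed [simp]: "tlabels t \<subseteq> \<Sigma> \<Longrightarrow> eval_tree A \<sigma> t \<in> Hc A"
proof (induction t)
  case (Node a C)
  then have "eval_tree A \<sigma> ` fset C \<subseteq> Hc A"
    by (auto simp: flabels_def)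
  then show ?case
    using Node.prems by (simp add: eval_tree_Node eval_forest_def hsum_closed)
qed

lemma eval_tree_image_closed: "flabels f \<subseteq> \<Sigma> \<Longrightarrow> eval_tree A \<sigma> ` fset f \<subseteq> Hc A"
  by (meson eval_tree_closed image_subsetI order_trans tlabels_subset_flabels)

lemma eval_forest_closed [simp]: "flabels f \<subseteq> \<Sigma> \<Longrightarrow> eval_forest A \<sigma> f \<in> Hc A"
  unfolding eval_forest_def by (simp add: hsum_closed eval_tree_image_closed)

lemma eval_forest_union: "flabels f \<subseteq> \<Sigma> \<Longrightarrow> flabels g \<subseteq> \<Sigma> \<Longrightarrow>
    eval_forest A \<sigma> (f |\<union>| g) = hadd A (eval_forest A \<sigma> f) (eval_forest A \<sigma> g)"
  unfolding eval_forest_def by (simp add: image_Un hsum_union eval_tree_image_closed)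

lemma eval_forest_singleton: "tlabels t \<subseteq> \<Sigma> \<Longrightarrow> eval_forest A \<sigma> {|t|} = eval_tree A \<sigma> t"
  by (simp add: eval_forest_def)

lemma eval_forest_finsert: "tlabels t \<subseteq> \<Sigma> \<Longrightarrow> flabels f \<subseteq> \<Sigma> \<Longrightarrow>
    eval_forest A \<sigma> (finsert t f) = hadd A (eval_tree A \<sigma> t) (eval_forest A \<sigma> f)"
  using eval_forest_union[of "{|t|}" f] by (simp add: eval_forest_singleton)

lemma eval_forest_Node: "a \<in> \<Sigma> \<Longrightarrow> flabels C \<subseteq> \<Sigma> \<Longrightarrow>
    eval_forest A \<sigma> {|Node a C|} = act A (\<sigma> a) (eval_forest A \<sigma> C)"
  by (simp add: eval_forest_singleton eval_tree_Node)

lemma eval_ctx_closed [simp]: "clabels c \<subseteq> \<Sigma> \<Longrightarrow> eval_ctx A \<sigma> c \<in> Vc A"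
  by (induction c) auto

lemma eval_forest_fill: "clabels c \<subseteq> \<Sigma> \<Longrightarrow> flabels f \<subseteq> \<Sigma> \<Longrightarrow>
    eval_forest A \<sigma> (fill c f) = act A (eval_ctx A \<sigma> c) (eval_forest A \<sigma> f)"
  by (induction c)
    (auto simp: eval_forest_union eval_forest_finsert eval_tree_Node act_ins act_vmul hadd_commute)

lemma eval_ctx_cadd: "flabels F \<subseteq> \<Sigma> \<Longrightarrow> clabels c \<subseteq> \<Sigma> \<Longrightarrow>
    eval_ctx A \<sigma> (cadd F c) = vmul A (ins A (eval_forest A \<sigma> F)) (eval_ctx A \<sigma> c)"
  by (cases c) (auto simp: eval_forest_union ins_hadd vmul_assoc)

lemma eval_ctx_ccomp: "clabels c \<subseteq> \<Sigma> \<Longrightarrow> clabels d \<subseteq> \<Sigma> \<Longrightarrow>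
    eval_ctx A \<sigma> (ccomp c d) = vmul A (eval_ctx A \<sigma> c) (eval_ctx A \<sigma> d)"
  by (induction c) (auto simp: eval_ctx_cadd vmul_assoc)

lemma eval_ctx_letter: "a \<in> \<Sigma> \<Longrightarrow> eval_ctx A \<sigma> (letter a) = \<sigma> a"
  by (simp add: letter_def ins_hzero)

lemma morphism_eval: "morphism (free_falg \<Sigma>) A (eval_forest A \<sigma>) (eval_ctx A \<sigma>)"
  unfolding morphism_def free_falg_def
  by (auto simp: eval_forest_union eval_ctx_ccomp eval_forest_fill ins_hzero)

end

lemma forest_evalI: "forest_algebra A \<Longrightarrow> \<sigma> ` \<Sigma> \<subseteq> Vc A \<Longrightarrow> forest_eval A \<Sigma> \<sigma>"
  by (simp add: forest_eval_def forest_eval_axioms_def forest_alg_def)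

lemma is_subalgebra_free_falg: "is_subalgebra (free_falg \<Sigma>) (Hc (free_falg \<Sigma>)) (Vc (free_falg \<Sigma>))"
  by (simp add: is_subalgebra_def free_falg_def)

lemma (in forest_alg) image_eval_forest_id: "eval_forest A id ` Hc (free_falg (Vc A)) = Hc A"
  and image_eval_ctx_id: "eval_ctx A id ` Vc (free_falg (Vc A)) = Vc A"
proof -
  interpret forest_eval A "Vc A" id
    by unfold_locales auto
  have "h \<in> eval_forest A id ` Hc (free_falg (Vc A))" if h: "h \<in> Hc A" for h
  proof -
    obtain u where "u \<in> Vc A" "h = act A u (hzero A)"
      using exists_act_hzero[OF h] by blast
    then show ?thesis
      by (intro image_eqI[of _ _ "{|Node u {||}|}"]) (simp_all add: eval_forest_Node free_falg_def)
  qed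
  moreover have "u \<in> eval_ctx A id ` Vc (free_falg (Vc A))" if "u \<in> Vc A" for u
    using that by (intro image_eqI[of _ _ "letter u"]) (simp_all add: eval_ctx_letter free_falg_def)
  ultimately show "eval_forest A id ` Hc (free_falg (Vc A)) = Hc A"
    "eval_ctx A id ` Vc (free_falg (Vc A)) = Vc A"
    by (auto simp: free_falg_def)
qed

section \<open>The wreath product\<close>

lemma wreath_simps [simp]:
  "Hc (wreath G1 G2) = Hc G1 \<times> Hc G2"
  "Vc (wreath G1 G2) = (Hc G2 \<rightarrow>\<^sub>E Vc G1) \<times> Vc G2"
  "hadd (wreath G1 G2) (a1, a2) (b1, b2) = (hadd G1 a1 b1, hadd G2 a2 b2)"
  "hzero (wreath G1 G2) = (hzero G1, hzero G2)"
  "vmul (wreath G1 G2) (g, v) (g', v') =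
     (\<lambda>h\<in>Hc G2. vmul G1 (g (act G2 v' h)) (g' h), vmul G2 v v')"
  "vone (wreath G1 G2) = (\<lambda>h\<in>Hc G2. vone G1, vone G2)"
  "act (wreath G1 G2) (g, v) (h1, h2) = (act G1 (g h2) h1, act G2 v h2)"
  "ins (wreath G1 G2) (h1, h2) = (\<lambda>h\<in>Hc G2. ins G1 h1, ins G2 h2)"
  by (simp_all add: wreath_def)

lemma forest_algebra_wreath:
  assumes "forest_algebra G1" and "forest_algebra G2"
  shows "forest_algebra (wreath G1 G2)"
proof -
  interpret G1: forest_alg G1 by (rule forest_alg.intro) fact
  interpret G2: forest_alg G2 by (rule forest_alg.intro) fact
  let ?W = "wreath G1 G2"
  have vmul_assoc:
    "\<forall>x\<in>Vc ?W. \<forall>y\<in>Vc ?W. \<forall>z\<in>Vc ?W. vmul ?W (vmul ?W x y) z = vmul ?W x (vmul ?W y z)"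
    by (auto simp: G2.act_vmul G1.vmul_assoc G2.vmul_assoc PiE_iff intro!: ext)
  have faithful: "\<forall>x\<in>Vc ?W. \<forall>y\<in>Vc ?W. (\<forall>h\<in>Hc ?W. act ?W x h = act ?W y h) \<longrightarrow> x = y"
  proof (intro ballI impI)
    fix x y assume x: "x \<in> Vc ?W" and y: "y \<in> Vc ?W" and eq: "\<forall>h\<in>Hc ?W. act ?W x h = act ?W y h"
    obtain g v g' v' where xy: "x = (g, v)" "y = (g', v')"
      and g: "g \<in> Hc G2 \<rightarrow>\<^sub>E Vc G1" "g' \<in> Hc G2 \<rightarrow>\<^sub>E Vc G1" and v: "v \<in> Vc G2" "v' \<in> Vc G2"
      using x y by auto
    have act_eq: "act G1 (g h2) h1 = act G1 (g' h2) h1 \<and> act G2 v h2 = act G2 v' h2"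
      if "h1 \<in> Hc G1" "h2 \<in> Hc G2" for h1 h2
      using eq that by (auto simp: xy)
    have "v = v'"
      using act_eq[OF G1.hzero_closed] v by (intro G2.act_faithful) auto
    moreover have "g = g'"
      using act_eq g by (intro PiE_ext[OF g(1)] G1.act_faithful) auto
    ultimately show "x = y"
      using xy by simp
  qed
  have generated: "\<forall>h\<in>Hc ?W. \<exists>v\<in>Vc ?W. h = act ?W v (hzero ?W)"
  proof
    fix h assume "h \<in> Hc ?W"
    then show "\<exists>v\<in>Vc ?W. h = act ?W v (hzero ?W)"
      by (intro bexI[of _ "ins ?W h"]) (auto simp: G1.act_ins G2.act_ins)
  qed
  show ?thesis
    unfolding forest_algebra_def
    by (intro conjI vmul_assoc faithful generated)
      (auto simp: PiE_iff G1.hadd_assoc G2.hadd_assoc G1.hadd_commute G2.hadd_commute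
        G1.hadd_left_commute G2.hadd_left_commute
        G1.act_vmul G2.act_vmul G1.act_ins G2.act_ins extensional_def)
qed

lemma morphism_wreath_snd: "morphism (wreath G1 G2) G2 snd snd"
  by (auto simp: morphism_def wreath_def split: prod.splits)

section \<open>Transport along injections\<close>

definition transport :: "('h, 'v, 'z) falg_scheme \<Rightarrow> ('h \<Rightarrow> 'p) \<Rightarrow> ('v \<Rightarrow> 'q) \<Rightarrow> ('p, 'q) falg" where
  "transport A i j =
     \<lparr> Hc = i ` Hc A, Vc = j ` Vc A,
       hadd = (\<lambda>x y. i (hadd A (inv_into (Hc A) i x) (inv_into (Hc A) i y))), hzero = i (hzero A),
       vmul = (\<lambda>x y. j (vmul A (inv_into (Vc A) j x) (inv_into (Vc A) j y))), vone = j (vone A),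
       act = (\<lambda>x y. i (act A (inv_into (Vc A) j x) (inv_into (Hc A) i y))),
       ins = (\<lambda>x. j (ins A (inv_into (Hc A) i x))) \<rparr>"

lemma transport_simps:
  assumes "inj_on i (Hc A)" "inj_on j (Vc A)"
  shows "Hc (transport A i j) = i ` Hc A" "Vc (transport A i j) = j ` Vc A"
    "hzero (transport A i j) = i (hzero A)" "vone (transport A i j) = j (vone A)"
    "x \<in> Hc A \<Longrightarrow> y \<in> Hc A \<Longrightarrow> hadd (transport A i j) (i x) (i y) = i (hadd A x y)"
    "u \<in> Vc A \<Longrightarrow> v \<in> Vc A \<Longrightarrow> vmul (transport A i j) (j u) (j v) = j (vmul A u v)"
    "u \<in> Vc A \<Longrightarrow> y \<in> Hc A \<Longrightarrow> act (transport A i j) (j u) (i y) = i (act A u y)"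
    "y \<in> Hc A \<Longrightarrow> ins (transport A i j) (i y) = j (ins A y)"
  using assms by (simp_all add: transport_def)

lemma forest_algebra_transport:
  assumes A: "forest_algebra A" and i: "inj_on i (Hc A)" and j: "inj_on j (Vc A)"
  shows "forest_algebra (transport A i j)"
proof -
  interpret forest_alg A by (rule forest_alg.intro) fact
  note simps = transport_simps[OF i j] Ball_image_comp comp_def
  have faithful: "\<forall>u\<in>Vc A. \<forall>v\<in>Vc A. (\<forall>h\<in>Hc A. i (act A u h) = i (act A v h)) \<longrightarrow> j u = j v"
    using i by (metis act_closed act_faithful inj_on_contraD)
  show ?thesis
    unfolding forest_algebra_def
    using i j faithful exists_act_hzero
    by (simp add: simps hadd_assoc hadd_commute hadd_left_commute vmul_assoc act_vmul act_ins
        inj_on_eq_iff)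
qed

lemma distributive_transport:
  assumes "forest_algebra A" "inj_on i (Hc A)" "inj_on j (Vc A)" "distributive A"
  shows "distributive (transport A i j)"
proof -
  interpret forest_alg A by (rule forest_alg.intro) fact
  show ?thesis
    using assms(4)
    by (simp add: distributive_def transport_simps[OF assms(2,3)] Ball_image_comp comp_def)
qed

section \<open>Division\<close>

lemma restrict_alg_simps [simp]:
  "Hc (restrict_alg W H V) = H" "Vc (restrict_alg W H V) = V"
  "hadd (restrict_alg W H V) = hadd W" "hzero (restrict_alg W H V) = hzero W"
  "vmul (restrict_alg W H V) = vmul W" "vone (restrict_alg W H V) = vone W"
  "act (restrict_alg W H V) = act W" "ins (restrict_alg W H V) = ins W"
  by (simp_all add: restrict_alg_def)

lemma quotient_alg_simps:
  "Hc (quotient_alg A R S) = Hc A // R" "Vc (quotient_alg A R S) = Vc A // S"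
  "hadd (quotient_alg A R S) X Y = \<Union>{R `` {hadd A x y} | x y. x \<in> X \<and> y \<in> Y}"
  "hzero (quotient_alg A R S) = R `` {hzero A}"
  "vmul (quotient_alg A R S) X' Y' = \<Union>{S `` {vmul A x y} | x y. x \<in> X' \<and> y \<in> Y'}"
  "vone (quotient_alg A R S) = S `` {vone A}"
  "act (quotient_alg A R S) X' Y = \<Union>{R `` {act A x y} | x y. x \<in> X' \<and> y \<in> Y}"
  "ins (quotient_alg A R S) Y = \<Union>{S `` {ins A y} | y. y \<in> Y}"
  by (simp_all add: quotient_alg_def)

lemma Union_classes:
  assumes "x \<in> X" "y \<in> Y" "\<And>x' y'. x' \<in> X \<Longrightarrow> y' \<in> Y \<Longrightarrow> E``{g x' y'} = E``{g x y}"
  shows "\<Union>{E``{g x' y'} | x' y'. x' \<in> X \<and> y' \<in> Y} = E``{g x y}"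
  using assms by blast

lemma Union_classes_unary:
  assumes "y \<in> Y" "\<And>y'. y' \<in> Y \<Longrightarrow> E``{g y'} = E``{g y}"
  shows "\<Union>{E``{g y'} | y'. y' \<in> Y} = E``{g y}"
  using assms by blast

locale falg_congruence =
  fixes A :: "('h, 'v, 'z) falg_scheme" and R :: "'h rel" and S :: "'v rel"
  assumes congruence: "congruence A R S"
begin

abbreviation Q where "Q \<equiv> quotient_alg A R S"

lemma equiv_R: "equiv (Hc A) R" and equiv_S: "equiv (Vc A) S"
  using congruence by (simp_all add: congruence_def)

lemma hadd_cong: "(x, x') \<in> R \<Longrightarrow> (y, y') \<in> R \<Longrightarrow> (hadd A x y, hadd A x' y') \<in> R"
  and vmul_cong: "(u, u') \<in> S \<Longrightarrow> (v, v') \<in> S \<Longrightarrow> (vmul A u v, vmul A u' v') \<in> S"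
  and act_cong: "(u, u') \<in> S \<Longrightarrow> (y, y') \<in> R \<Longrightarrow> (act A u y, act A u' y') \<in> R"
  and ins_cong: "(y, y') \<in> R \<Longrightarrow> (ins A y, ins A y') \<in> S"
  using congruence by (simp_all add: congruence_def)

lemma R_class_eq: "(x, x') \<in> R \<Longrightarrow> R``{x'} = R``{x}"
  and S_class_eq: "(u, u') \<in> S \<Longrightarrow> S``{u'} = S``{u}"
  using equiv_R equiv_S by (metis equiv_class_eq equiv_def symD)+

lemma R_class_self: "x \<in> Hc A \<Longrightarrow> x \<in> R``{x}"
  and S_class_self: "u \<in> Vc A \<Longrightarrow> u \<in> S``{u}"
  by (rule equiv_class_self[OF equiv_R], assumption) (rule equiv_class_self[OF equiv_S])

lemma hadd_class: "x \<in> Hc A \<Longrightarrow> y \<in> Hc A \<Longrightarrow> hadd Q (R``{x}) (R``{y}) = R``{hadd A x y}"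
  unfolding quotient_alg_simps
  by (rule Union_classes[OF R_class_self R_class_self])
    (metis Image_singleton_iff R_class_eq hadd_cong)+

lemma vmul_class: "u \<in> Vc A \<Longrightarrow> v \<in> Vc A \<Longrightarrow> vmul Q (S``{u}) (S``{v}) = S``{vmul A u v}"
  unfolding quotient_alg_simps
  by (rule Union_classes[OF S_class_self S_class_self])
    (metis Image_singleton_iff S_class_eq vmul_cong)+

lemma act_class: "u \<in> Vc A \<Longrightarrow> y \<in> Hc A \<Longrightarrow> act Q (S``{u}) (R``{y}) = R``{act A u y}"
  unfolding quotient_alg_simps
  by (rule Union_classes[OF S_class_self R_class_self])
    (metis Image_singleton_iff R_class_eq act_cong)+

lemma ins_class: "y \<in> Hc A \<Longrightarrow> ins Q (R``{y}) = S``{ins A y}"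
  unfolding quotient_alg_simps
  by (rule Union_classes_unary[OF R_class_self]) (metis Image_singleton_iff S_class_eq ins_cong)+

end

definition kernel_rel :: "'a set \<Rightarrow> ('a \<Rightarrow> 'b) \<Rightarrow> 'a rel" where
  "kernel_rel X f = {(x, y). x \<in> X \<and> y \<in> X \<and> f x = f y}"

lemma equiv_kernel_rel: "equiv X (kernel_rel X f)"
  by (auto simp: kernel_rel_def equiv_def refl_on_def sym_def trans_def)

lemma kernel_rel_class_some: "x \<in> X \<Longrightarrow> f (SOME y. y \<in> kernel_rel X f `` {x}) = f x"
  by (rule someI2[of _ x]) (auto simp: kernel_rel_def)

lemma bij_betw_kernel_rel_quotient:
  "bij_betw (\<lambda>C. f (SOME x. x \<in> C)) (X // kernel_rel X f) (f ` X)"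
proof (rule bij_betw_imageI)
  show "inj_on (\<lambda>C. f (SOME x. x \<in> C)) (X // kernel_rel X f)"
  proof (rule inj_onI)
    fix C D assume "C \<in> X // kernel_rel X f" "D \<in> X // kernel_rel X f"
      and eq: "f (SOME x. x \<in> C) = f (SOME x. x \<in> D)"
    then obtain x y where "x \<in> X" "y \<in> X"
      and C: "C = kernel_rel X f `` {x}" and D: "D = kernel_rel X f `` {y}"
      by (auto elim!: quotientE)
    then have "f x = f y"
      using eq kernel_rel_class_some[of x X f] kernel_rel_class_some[of y X f] by simp
    then have "(x, y) \<in> kernel_rel X f"
      using \<open>x \<in> X\<close> \<open>y \<in> X\<close> by (simp add: kernel_rel_def)
    then show "C = D"
      unfolding C D by (rule equiv_class_eq[OF equiv_kernel_rel])
  qed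
  show "(\<lambda>C. f (SOME x. x \<in> C)) ` (X // kernel_rel X f) = f ` X"
  proof -
    have "(\<lambda>C. f (SOME x. x \<in> C)) ` (X // kernel_rel X f)
        = (\<lambda>C. f (SOME x. x \<in> C)) ` (\<lambda>x. kernel_rel X f `` {x}) ` X"
      by (simp only: quotient_def image_UN image_insert image_empty UNION_singleton_eq_range)
    also have "\<dots> = f ` X"
      unfolding image_image by (rule image_cong[OF refl kernel_rel_class_some])
    finally show ?thesis .
  qed
qed

lemma congruence_kernel_rel:
  assumes "is_subalgebra W H V" and "morphism (restrict_alg W H V) F \<theta> \<chi>"
  shows "congruence (restrict_alg W H V) (kernel_rel H \<theta>) (kernel_rel V \<chi>)"
  unfolding congruence_def restrict_alg_simps
  by (intro conjI equiv_kernel_rel allI impI)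
    (use assms in \<open>auto simp: is_subalgebra_def morphism_def kernel_rel_def\<close>)

lemma divides_if_surjective_morphism:
  assumes sub: "is_subalgebra W H V" and hom: "morphism (restrict_alg W H V) F \<theta> \<chi>"
    and onto_H: "\<theta> ` H = Hc F" and onto_V: "\<chi> ` V = Vc F"
  shows "divides F W"
proof -
  let ?R = "kernel_rel H \<theta>" and ?S = "kernel_rel V \<chi>"
  have cong: "congruence (restrict_alg W H V) ?R ?S"
    using sub hom by (rule congruence_kernel_rel)
  interpret falg_congruence "restrict_alg W H V" ?R ?S
    using cong by unfold_locales
  define \<Phi> where "\<Phi> = (\<lambda>C. \<theta> (SOME x. x \<in> C))"
  define \<Psi> where "\<Psi> = (\<lambda>C. \<chi> (SOME x. x \<in> C))"
  have \<Phi>: "\<Phi> (?R``{x}) = \<theta> x" if "x \<in> H" for x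
    using that unfolding \<Phi>_def by (rule kernel_rel_class_some)
  have \<Psi>: "\<Psi> (?S``{v}) = \<chi> v" if "v \<in> V" for v
    using that unfolding \<Psi>_def by (rule kernel_rel_class_some)
  have "morphism Q F \<Phi> \<Psi>"
    using sub hom
    unfolding morphism_def is_subalgebra_def quotient_alg_simps(1,2) restrict_alg_simps
    by (auto elim!: quotientE
        simp: \<Phi> \<Psi> hadd_class vmul_class act_class ins_class quotient_alg_simps(4,6))
  moreover have "bij_betw \<Phi> (H // ?R) (Hc F)" "bij_betw \<Psi> (V // ?S) (Vc F)"
    unfolding \<Phi>_def \<Psi>_def onto_H[symmetric] onto_V[symmetric]
    by (rule bij_betw_kernel_rel_quotient)+
  ultimately have "isomorphism Q F \<Phi> \<Psi>"
    by (simp add: isomorphism_def quotient_alg_simps)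
  then show ?thesis
    unfolding divides_def using sub cong by blast
qed

lemma divides_obtains_surjective_morphism:
  assumes "divides F W"
  obtains H V \<theta> \<chi> where "is_subalgebra W H V" "morphism (restrict_alg W H V) F \<theta> \<chi>"
    "\<theta> ` H = Hc F" "\<chi> ` V = Vc F"
proof -
  obtain H V R S \<Phi> \<Psi> where sub: "is_subalgebra W H V"
    and cong: "congruence (restrict_alg W H V) R S"
    and iso: "isomorphism (quotient_alg (restrict_alg W H V) R S) F \<Phi> \<Psi>"
    using assms unfolding divides_def by blast
  interpret falg_congruence "restrict_alg W H V" R S
    using cong by unfold_locales
  have hom: "morphism (restrict_alg W H V) F (\<lambda>x. \<Phi> (R``{x})) (\<lambda>v. \<Psi> (S``{v}))"
    using sub iso
    unfolding morphism_def isomorphism_def is_subalgebra_def quotient_alg_simps(1,2)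
      restrict_alg_simps
    by (auto simp: quotientI quotient_alg_simps(4,6)
        hadd_class[simplified, symmetric] vmul_class[simplified, symmetric]
        act_class[simplified, symmetric] ins_class[simplified, symmetric])
  have "(\<lambda>x. \<Phi> (R``{x})) ` H = \<Phi> ` (H // R)" "(\<lambda>v. \<Psi> (S``{v})) ` V = \<Psi> ` (V // S)"
    by (simp_all add: quotient_def UNION_singleton_eq_range image_image)
  moreover have "\<Phi> ` (H // R) = Hc F" "\<Psi> ` (V // S) = Vc F"
    using iso by (simp_all add: isomorphism_def bij_betw_def quotient_alg_simps)
  ultimately show thesis
    using that[OF sub hom] by simp
qed

lemma is_subalgebraD:
  assumes "is_subalgebra A H V"
  shows "H \<subseteq> Hc A" "V \<subseteq> Vc A" "hzero A \<in> H" "vone A \<in> V"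
    "\<And>x y. x \<in> H \<Longrightarrow> y \<in> H \<Longrightarrow> hadd A x y \<in> H"
    "\<And>u v. u \<in> V \<Longrightarrow> v \<in> V \<Longrightarrow> vmul A u v \<in> V"
    "\<And>u y. u \<in> V \<Longrightarrow> y \<in> H \<Longrightarrow> act A u y \<in> H"
    "\<And>y. y \<in> H \<Longrightarrow> ins A y \<in> V"
  using assms by (simp_all add: is_subalgebra_def subset_iff)

lemma inv_into_kernel:
  assumes "x \<in> X" "\<And>x y. x \<in> X \<Longrightarrow> y \<in> X \<Longrightarrow> f x = f y \<Longrightarrow> g x = g y"
  shows "g (inv_into X f (f x)) = g x"
  using assms by (metis f_inv_into_f image_eqI inv_into_into)

lemma is_subalgebra_morphism_image:
  assumes "is_subalgebra A (Hc A) (Vc A)" "morphism A W \<alpha> \<alpha>'"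
  shows "is_subalgebra W (\<alpha> ` Hc A) (\<alpha>' ` Vc A)"
  using assms unfolding is_subalgebra_def morphism_def
  by (auto intro!: image_eqI[OF sym])

lemma ctx_kernel_subset:
  assumes A: "is_subalgebra A (Hc A) (Vc A)" and F: "forest_algebra F"
    and \<alpha>: "morphism A W \<alpha> \<alpha>'" and \<beta>: "morphism A F \<beta> \<beta>'"
    and onto: "\<beta> ` Hc A = Hc F" "\<beta>' ` Vc A = Vc F"
    and ker: "\<And>x y. x \<in> Hc A \<Longrightarrow> y \<in> Hc A \<Longrightarrow> \<alpha> x = \<alpha> y \<Longrightarrow> \<beta> x = \<beta> y"
    and cd: "c \<in> Vc A" "d \<in> Vc A" "\<alpha>' c = \<alpha>' d"
  shows "\<beta>' c = \<beta>' d"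
proof (rule forest_alg.act_faithful[OF forest_alg.intro[OF F]])
  show "\<beta>' c \<in> Vc F" "\<beta>' d \<in> Vc F"
    using onto(2) cd by auto
  fix h assume "h \<in> Hc F"
  then obtain x where x: "x \<in> Hc A" "h = \<beta> x"
    using onto(1) by auto
  have "\<alpha> (act A c x) = \<alpha> (act A d x)"
    using \<alpha> cd x by (simp add: morphism_def)
  then have "\<beta> (act A c x) = \<beta> (act A d x)"
    using cd x by (intro ker) (simp_all add: is_subalgebraD(7)[OF A])
  then show "act F (\<beta>' c) h = act F (\<beta>' d) h"
    using \<beta> cd x by (simp add: morphism_def)
qed

lemma divides_if_kernel_subset:
  assumes A: "is_subalgebra A (Hc A) (Vc A)" and F: "forest_algebra F"
    and \<alpha>: "morphism A W \<alpha> \<alpha>'" and \<beta>: "morphism A F \<beta> \<beta>'"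
    and onto: "\<beta> ` Hc A = Hc F" "\<beta>' ` Vc A = Vc F"
    and ker: "\<And>x y. x \<in> Hc A \<Longrightarrow> y \<in> Hc A \<Longrightarrow> \<alpha> x = \<alpha> y \<Longrightarrow> \<beta> x = \<beta> y"
  shows "divides F W"
proof -
  define \<theta> where "\<theta> h = \<beta> (inv_into (Hc A) \<alpha> h)" for h
  define \<chi> where "\<chi> v = \<beta>' (inv_into (Vc A) \<alpha>' v)" for v
  have \<theta>: "\<theta> (\<alpha> x) = \<beta> x" if "x \<in> Hc A" for x
    unfolding \<theta>_def using that ker by (rule inv_into_kernel)
  have \<chi>: "\<chi> (\<alpha>' c) = \<beta>' c" if "c \<in> Vc A" for c
    unfolding \<chi>_def using that ctx_kernel_subset[OF assms] by (rule inv_into_kernel)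
  have \<alpha>_rev: "hzero W = \<alpha> (hzero A)" "vone W = \<alpha>' (vone A)"
    "\<And>x y. x \<in> Hc A \<Longrightarrow> y \<in> Hc A \<Longrightarrow> hadd W (\<alpha> x) (\<alpha> y) = \<alpha> (hadd A x y)"
    "\<And>c d. c \<in> Vc A \<Longrightarrow> d \<in> Vc A \<Longrightarrow> vmul W (\<alpha>' c) (\<alpha>' d) = \<alpha>' (vmul A c d)"
    "\<And>c x. c \<in> Vc A \<Longrightarrow> x \<in> Hc A \<Longrightarrow> act W (\<alpha>' c) (\<alpha> x) = \<alpha> (act A c x)"
    "\<And>x. x \<in> Hc A \<Longrightarrow> ins W (\<alpha> x) = \<alpha>' (ins A x)"
    using \<alpha> by (simp_all add: morphism_def)
  have "morphism (restrict_alg W (\<alpha> ` Hc A) (\<alpha>' ` Vc A)) F \<theta> \<chi>"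
    using A \<beta> onto unfolding morphism_def is_subalgebra_def restrict_alg_simps
    by (auto simp: \<theta> \<chi> \<alpha>_rev)
  moreover have "\<theta> ` \<alpha> ` Hc A = Hc F" "\<chi> ` \<alpha>' ` Vc A = Vc F"
    using onto by (simp_all add: image_image \<theta> \<chi> cong: image_cong)
  ultimately show ?thesis
    using is_subalgebra_morphism_image[OF A \<alpha>] by (intro divides_if_surjective_morphism)
qed

context forest_alg
begin

lemma eval_forest_in_subalgebra:
  assumes sub: "is_subalgebra A H V" and \<sigma>: "\<sigma> ` \<Sigma> \<subseteq> V"
  shows "flabels f \<subseteq> \<Sigma> \<Longrightarrow> eval_forest A \<sigma> f \<in> H"
proof -
  interpret forest_eval A \<Sigma> \<sigma>
    using is_subalgebraD(2)[OF sub] \<sigma> by unfold_locales auto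
  show "flabels f \<subseteq> \<Sigma> \<Longrightarrow> eval_forest A \<sigma> f \<in> H"
  proof (induction f rule: forest_induct)
    case empty
    then show ?case by (simp add: is_subalgebraD(3)[OF sub])
  next
    case (insert t f)
    then show ?case
      using eval_forest_finsert[of t f] eval_forest_singleton[of t]
      by (simp add: is_subalgebraD(5)[OF sub])
  next
    case (Node a C)
    then show ?case
      using \<sigma> by (simp add: eval_forest_Node is_subalgebraD(7)[OF sub] image_subset_iff)
  qed
qed

lemma eval_forest_morphism_subalgebra:
  assumes sub: "is_subalgebra A H V" and hom: "morphism (restrict_alg A H V) B \<theta> \<chi>"
    and B: "forest_algebra B" and \<sigma>: "\<sigma> ` \<Sigma> \<subseteq> V"
  shows "flabels f \<subseteq> \<Sigma> \<Longrightarrow> \<theta> (eval_forest A \<sigma> f) = eval_forest B (\<lambda>a. \<chi> (\<sigma> a)) f"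
proof -
  interpret A: forest_eval A \<Sigma> \<sigma>
    using is_subalgebraD(2)[OF sub] \<sigma> by unfold_locales auto
  interpret B: forest_eval B \<Sigma> "\<lambda>a. \<chi> (\<sigma> a)"
    using B hom \<sigma> by unfold_locales (auto simp: morphism_def)
  have in_H: "flabels f \<subseteq> \<Sigma> \<Longrightarrow> eval_forest A \<sigma> f \<in> H" for f
    using sub \<sigma> by (rule eval_forest_in_subalgebra)
  have \<theta>_hadd: "\<And>x y. x \<in> H \<Longrightarrow> y \<in> H \<Longrightarrow> \<theta> (hadd A x y) = hadd B (\<theta> x) (\<theta> y)"
    and \<theta>_act: "\<And>u y. u \<in> V \<Longrightarrow> y \<in> H \<Longrightarrow> \<theta> (act A u y) = act B (\<chi> u) (\<theta> y)"
    and \<theta>_hzero: "\<theta> (hzero A) = hzero B"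
    using hom by (simp_all add: morphism_def)
  show "flabels f \<subseteq> \<Sigma> \<Longrightarrow> \<theta> (eval_forest A \<sigma> f) = eval_forest B (\<lambda>a. \<chi> (\<sigma> a)) f"
  proof (induction f rule: forest_induct)
    case empty
    then show ?case by (simp add: \<theta>_hzero)
  next
    case (insert t f)
    then show ?case
      using A.eval_forest_finsert[of t f] A.eval_forest_singleton[of t]
        B.eval_forest_finsert[of t f] B.eval_forest_singleton[of t] in_H[of "{|t|}"]
      by (simp add: \<theta>_hadd in_H)
  next
    case (Node a C)
    then show ?case
      using \<sigma> by (simp add: A.eval_forest_Node B.eval_forest_Node \<theta>_act in_H image_subset_iff)
  qed
qed

lemma eval_forest_morphism:
  assumes "morphism A B \<theta> \<chi>" "forest_algebra B" "\<sigma> ` \<Sigma> \<subseteq> Vc A" "flabels f \<subseteq> \<Sigma>"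
  shows "\<theta> (eval_forest A \<sigma> f) = eval_forest B (\<lambda>a. \<chi> (\<sigma> a)) f"
  using assms by (intro eval_forest_morphism_subalgebra[OF is_subalgebra_carrier])
    (simp_all add: morphism_def)

lemma morphism_free_falg_eq_eval:
  assumes hom: "morphism (free_falg \<Sigma>) A \<phi> \<psi>"
  shows "flabels f \<subseteq> \<Sigma> \<Longrightarrow> \<phi> f = eval_forest A (\<lambda>a. \<psi> (letter a)) f"
proof -
  interpret forest_eval A \<Sigma> "\<lambda>a. \<psi> (letter a)"
    using hom by unfold_locales (auto simp: morphism_def free_falg_def)
  have \<phi>_hzero: "\<phi> {||} = hzero A"
    and \<phi>_union: "\<And>f g. flabels f \<subseteq> \<Sigma> \<Longrightarrow> flabels g \<subseteq> \<Sigma> \<Longrightarrow>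
      \<phi> (f |\<union>| g) = hadd A (\<phi> f) (\<phi> g)"
    and \<phi>_fill: "\<And>c f. clabels c \<subseteq> \<Sigma> \<Longrightarrow> flabels f \<subseteq> \<Sigma> \<Longrightarrow>
      \<phi> (fill c f) = act A (\<psi> c) (\<phi> f)"
    using hom by (simp_all add: morphism_def free_falg_def)
  show "flabels f \<subseteq> \<Sigma> \<Longrightarrow> \<phi> f = eval_forest A (\<lambda>a. \<psi> (letter a)) f"
  proof (induction f rule: forest_induct)
    case empty
    then show ?case by (simp add: \<phi>_hzero)
  next
    case (insert t f)
    then show ?case
      using \<phi>_union[of "{|t|}" f] eval_forest_finsert[of t f] eval_forest_singleton[of t] by simp
  next
    case (Node a C)
    then show ?case
      using \<phi>_fill[of "letter a" C] by (simp add: eval_forest_Node)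
  qed
qed

end

lemma two_distributiveI:
  assumes A: "forest_algebra A"
    and eval: "\<And>(\<Sigma> :: nat set) \<sigma> v f1 f2. finite \<Sigma> \<Longrightarrow> \<sigma> ` \<Sigma> \<subseteq> Vc A \<Longrightarrow>
      clabels v \<subseteq> \<Sigma> \<Longrightarrow> flabels f1 \<subseteq> \<Sigma> \<Longrightarrow> flabels f2 \<subseteq> \<Sigma> \<Longrightarrow> paths f1 = paths f2 \<Longrightarrow>
      eval_forest A \<sigma> (fill v (f1 |\<union>| f2)) = eval_forest A \<sigma> (fill v f1 |\<union>| fill v f2)"
  shows "two_distributive A"
  unfolding two_distributive_def
proof (intro allI impI ballI)
  fix \<Sigma> :: "nat set" and \<phi> \<psi> v f1 f2
  assume "finite \<Sigma>" and hom: "morphism (free_falg \<Sigma>) A \<phi> \<psi>"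
    and "v \<in> Vc (free_falg \<Sigma>)" "f1 \<in> Hc (free_falg \<Sigma>)" "f2 \<in> Hc (free_falg \<Sigma>)"
    and "paths f1 = paths f2"
  moreover have "(\<lambda>a. \<psi> (letter a)) ` \<Sigma> \<subseteq> Vc A"
    using hom by (auto simp: morphism_def free_falg_def)
  ultimately show "\<phi> (fill v (f1 |\<union>| f2)) = \<phi> (fill v f1 |\<union>| fill v f2)"
    using forest_alg.morphism_free_falg_eq_eval[OF forest_alg.intro[OF A] hom] eval
    by (simp add: free_falg_def)
qed

primrec rename_tree :: "('a \<Rightarrow> 'b) \<Rightarrow> 'a tree \<Rightarrow> 'b tree" where
  "rename_tree r (Node a C) = Node (r a) (fimage (rename_tree r) C)"

primrec rename_ctx :: "('a \<Rightarrow> 'b) \<Rightarrow> 'a ctx \<Rightarrow> 'b ctx" where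
  "rename_ctx r (CHole F) = CHole (fimage (rename_tree r) F)"
| "rename_ctx r (CNode F a c) = CNode (fimage (rename_tree r) F) (r a) (rename_ctx r c)"

lemma flabels_rename: "flabels (fimage (rename_tree r) f) = r ` flabels f"
proof -
  have "tlabels (rename_tree r t) = r ` tlabels t" for t
    by (induction t) (auto simp: flabels_def)
  then show ?thesis by (auto simp: flabels_def)
qed

lemma clabels_rename: "clabels (rename_ctx r c) = r ` clabels c"
  by (induction c) (auto simp: flabels_rename)

lemma paths_rename: "paths (fimage (rename_tree r) f) = map r ` paths f"
proof -
  have "tpaths (rename_tree r t) = map r ` tpaths t" for t
    by (induction t) (auto simp: paths_def image_UN image_image)
  then show ?thesis by (auto simp: paths_def)
qed

lemma fill_rename:
  "fill (rename_ctx r c) (fimage (rename_tree r) f) = fimage (rename_tree r) (fill c f)"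
  by (induction c) auto

lemma eval_forest_rename:
  "eval_forest A \<sigma> (fimage (rename_tree r) f) = eval_forest A (\<lambda>a. \<sigma> (r a)) f"
proof -
  have "eval_tree A \<sigma> (rename_tree r t) = eval_tree A (\<lambda>a. \<sigma> (r a)) t" for t
    by (induction t) (simp add: eval_tree.simps fimage_fimage comp_def cong: fset.map_cong)
  then show ?thesis by (simp add: eval_forest_def image_image)
qed

lemma eval_forest_cong:
  assumes "\<And>a. a \<in> flabels f \<Longrightarrow> \<sigma> a = \<tau> a"
  shows "eval_forest A \<sigma> f = eval_forest A \<tau> f"
proof -
  have "(\<And>a. a \<in> tlabels t \<Longrightarrow> \<sigma> a = \<tau> a) \<Longrightarrow> eval_tree A \<sigma> t = eval_tree A \<tau> t" for t :: "'a tree"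
  proof (induction t)
    case (Node a C)
    have "eval_tree A \<sigma> t = eval_tree A \<tau> t" if "t |\<in>| C" for t
      using Node.IH[OF that] Node.prems tlabels_subset_flabels[OF that] by auto
    then show ?case
      using Node.prems by (simp add: eval_tree_Node eval_forest_def cong: image_cong)
  qed
  then have "eval_tree A \<sigma> t = eval_tree A \<tau> t" if "t |\<in>| f" for t
    using assms tlabels_subset_flabels[OF that] by blast
  then show ?thesis
    by (simp add: eval_forest_def cong: image_cong)
qed

lemma finite_clabels: "finite (clabels c)"
  by (induction c) (simp_all add: finite_flabels)

lemma two_distributive_eval:
  assumes A: "forest_algebra A" and td: "two_distributive A" and \<sigma>: "\<sigma> ` \<Sigma> \<subseteq> Vc A"
    and labels: "clabels v \<subseteq> \<Sigma>" "flabels f1 \<subseteq> \<Sigma>" "flabels f2 \<subseteq> \<Sigma>" and p: "paths f1 = paths f2"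
  shows "eval_forest A \<sigma> (fill v (f1 |\<union>| f2)) = eval_forest A \<sigma> (fill v f1 |\<union>| fill v f2)"
proof -
  define L where "L = clabels v \<union> flabels f1 \<union> flabels f2"
  have "finite L"
    by (simp add: L_def finite_clabels finite_flabels)
  then obtain r :: "_ \<Rightarrow> nat" where r: "inj_on r L"
    by (meson finite_imp_inj_to_nat_seg)
  define \<tau> where "\<tau> n = \<sigma> (inv_into L r n)" for n
  have \<tau>_r: "\<tau> (r a) = \<sigma> a" if "a \<in> L" for a
    using r that by (simp add: \<tau>_def)
  have L_\<Sigma>: "L \<subseteq> \<Sigma>"
    using labels by (simp add: L_def)
  interpret forest_eval A "r ` L" \<tau>
  proof unfold_locales
    show "\<tau> ` r ` L \<subseteq> Vc A"
      using \<sigma> L_\<Sigma> by (auto simp: \<tau>_r image_subset_iff subset_iff)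
  qed (rule A)
  let ?ren = "fimage (rename_tree r)"
  have eval_ren: "eval_forest A \<tau> (?ren g) = eval_forest A \<sigma> g" if "flabels g \<subseteq> L" for g
    unfolding eval_forest_rename using that by (intro eval_forest_cong) (auto simp: \<tau>_r)
  have "eval_forest A \<tau> (fill (rename_ctx r v) (?ren f1 |\<union>| ?ren f2))
      = eval_forest A \<tau> (fill (rename_ctx r v) (?ren f1) |\<union>| fill (rename_ctx r v) (?ren f2))"
  proof (rule td[unfolded two_distributive_def, rule_format, OF _ morphism_eval])
    show "finite (r ` L)"
      using \<open>finite L\<close> by simp
    show "rename_ctx r v \<in> Vc (free_falg (r ` L))" "?ren f1 \<in> Hc (free_falg (r ` L))"
      "?ren f2 \<in> Hc (free_falg (r ` L))"
      by (auto simp: free_falg_def L_def clabels_rename flabels_rename)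
    show "paths (?ren f1) = paths (?ren f2)"
      using p by (simp add: paths_rename)
  qed
  then have "eval_forest A \<tau> (?ren (fill v (f1 |\<union>| f2)))
      = eval_forest A \<tau> (?ren (fill v f1 |\<union>| fill v f2))"
    by (simp add: fill_rename flip: fimage_funion)
  moreover have "flabels (fill v (f1 |\<union>| f2)) \<subseteq> L" "flabels (fill v f1 |\<union>| fill v f2) \<subseteq> L"
    by (auto simp: L_def)
  ultimately show ?thesis
    by (simp add: eval_ren)
qed

corollary two_distributive_act_hadd:
  assumes A: "forest_algebra A" and td: "two_distributive A" and \<sigma>: "\<sigma> ` \<Sigma> \<subseteq> Vc A"
    and "a \<in> \<Sigma>" "flabels f1 \<subseteq> \<Sigma>" "flabels f2 \<subseteq> \<Sigma>" "paths f1 = paths f2"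
  shows "act A (\<sigma> a) (hadd A (eval_forest A \<sigma> f1) (eval_forest A \<sigma> f2)) =
    hadd A (act A (\<sigma> a) (eval_forest A \<sigma> f1)) (act A (\<sigma> a) (eval_forest A \<sigma> f2))"
proof -
  interpret forest_eval A \<Sigma> \<sigma>
    using A \<sigma> by unfold_locales
  show ?thesis
    using two_distributive_eval[OF A td \<sigma>, of "letter a" f1 f2] assms(4-)
    by (simp add: eval_forest_Node eval_forest_finsert eval_tree_Node eval_forest_union
        hadd_commute)
qed

section \<open>Labelled paths and absorption\<close>

lemma tpaths_Node: "tpaths (Node a C) = insert [a] ((#) a ` paths C)"
  by (simp add: paths_def fimage.rep_eq)

declare tpaths.simps [simp del]

lemma paths_empty [simp]: "paths {||} = {}"
  and paths_union [simp]: "paths (f |\<union>| g) = paths f \<union> paths g"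
  and paths_finsert [simp]: "paths (finsert t g) = tpaths t \<union> paths g"
  by (auto simp: paths_def)

primrec lpaths_tree :: "('a forest \<Rightarrow> 'k) \<Rightarrow> 'a tree \<Rightarrow> ('a \<times> 'k) list set" where
  "lpaths_tree \<kappa> (Node a C) =
     insert [(a, \<kappa> C)] ((#) (a, \<kappa> C) ` \<Union> (fset (fimage (lpaths_tree \<kappa>) C)))"

definition lpaths :: "('a forest \<Rightarrow> 'k) \<Rightarrow> 'a forest \<Rightarrow> ('a \<times> 'k) list set" where
  "lpaths \<kappa> f = \<Union> (lpaths_tree \<kappa> ` fset f)"

lemma lpaths_tree_Node: "lpaths_tree \<kappa> (Node a C) = insert [(a, \<kappa> C)] ((#) (a, \<kappa> C) ` lpaths \<kappa> C)"
  by (simp add: lpaths_def fimage.rep_eq)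

declare lpaths_tree.simps [simp del]

lemma Nil_notin_lpaths [simp]: "[] \<notin> lpaths \<kappa> f"
proof -
  have "[] \<notin> lpaths_tree \<kappa> t" for t
    by (cases t) (auto simp: lpaths_tree_Node)
  then show ?thesis by (simp add: lpaths_def)
qed

lemma lpaths_ffUnion: "lpaths \<kappa> (ffUnion Es) = (\<Union>E\<in>fset Es. lpaths \<kappa> E)"
  by (auto simp: lpaths_def ffUnion.rep_eq)

lemma flabels_ffUnion: "flabels (ffUnion Es) = (\<Union>E\<in>fset Es. flabels E)"
  by (auto simp: flabels_def ffUnion.rep_eq)

lemma lpaths_Cons_iff:
  "(a, Y) # p \<in> lpaths \<kappa> f \<longleftrightarrow> (\<exists>E. Node a E |\<in>| f \<and> \<kappa> E = Y \<and> (p = [] \<or> p \<in> lpaths \<kappa> E))"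
proof -
  have "(a, Y) # p \<in> lpaths_tree \<kappa> t \<longleftrightarrow> (\<exists>E. t = Node a E \<and> \<kappa> E = Y \<and> (p = [] \<or> p \<in> lpaths \<kappa> E))"
    for t
    by (cases t) (auto simp: lpaths_tree_Node)
  then show ?thesis
    by (auto simp: lpaths_def)
qed

primrec children :: "'a tree \<Rightarrow> 'a forest" where
  "children (Node a C) = C"

locale typewise_distributive = forest_eval A \<Sigma> \<sigma>
  for A :: "('h, 'v, 'z) falg_scheme" and \<Sigma> :: "'a set" and \<sigma> +
  fixes \<kappa> :: "'a forest \<Rightarrow> 'k"
  assumes type_union: "\<And>E1 E2. flabels E1 \<subseteq> \<Sigma> \<Longrightarrow> flabels E2 \<subseteq> \<Sigma> \<Longrightarrow> \<kappa> E1 = \<kappa> E2 \<Longrightarrow>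
      \<kappa> (E1 |\<union>| E2) = \<kappa> E1"
    and act_hadd_same_type: "\<And>a E1 E2. a \<in> \<Sigma> \<Longrightarrow> flabels E1 \<subseteq> \<Sigma> \<Longrightarrow> flabels E2 \<subseteq> \<Sigma> \<Longrightarrow>
      \<kappa> E1 = \<kappa> E2 \<Longrightarrow>
      act A (\<sigma> a) (hadd A (eval_forest A \<sigma> E1) (eval_forest A \<sigma> E2)) =
      hadd A (act A (\<sigma> a) (eval_forest A \<sigma> E1)) (act A (\<sigma> a) (eval_forest A \<sigma> E2))"
begin

lemma eval_forest_Node_ffUnion:
  assumes "a \<in> \<Sigma>" "Es \<noteq> {||}" "\<And>E. E |\<in>| Es \<Longrightarrow> flabels E \<subseteq> \<Sigma> \<and> \<kappa> E = Y"
  shows "eval_forest A \<sigma> (fimage (Node a) Es) = eval_tree A \<sigma> (Node a (ffUnion Es))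
    \<and> \<kappa> (ffUnion Es) = Y"
  using assms(2,3)
proof (induction Es rule: fset_induct)
  case (insert E Es)
  show ?case
  proof (cases "Es = {||}")
    case True
    then show ?thesis using insert.prems \<open>a \<in> \<Sigma>\<close> by (simp add: eval_forest_singleton)
  next
    case False
    have IH: "eval_forest A \<sigma> (fimage (Node a) Es) = eval_tree A \<sigma> (Node a (ffUnion Es))"
      "\<kappa> (ffUnion Es) = Y"
      using insert False by auto
    have E: "flabels E \<subseteq> \<Sigma>" "\<kappa> E = Y" and U: "flabels (ffUnion Es) \<subseteq> \<Sigma>"
      using insert.prems by (auto simp: flabels_ffUnion)
    have "flabels (fimage (Node a) Es) \<subseteq> \<Sigma>"
      using insert.prems \<open>a \<in> \<Sigma>\<close> by (auto simp: flabels_def)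
    then have "eval_forest A \<sigma> (fimage (Node a) (finsert E Es))
        = hadd A (act A (\<sigma> a) (eval_forest A \<sigma> E)) (act A (\<sigma> a) (eval_forest A \<sigma> (ffUnion Es)))"
      using E \<open>a \<in> \<Sigma>\<close> IH by (simp add: eval_forest_finsert eval_tree_Node)
    also have "\<dots> = eval_tree A \<sigma> (Node a (ffUnion (finsert E Es)))"
      using act_hadd_same_type[OF \<open>a \<in> \<Sigma>\<close> E(1) U] IH E U
      by (simp add: eval_forest_union eval_tree_Node)
    finally show ?thesis
      using type_union[OF E(1) U] IH E by simp
  qed
qed simp

lemma eval_forest_merge_siblings:
  assumes f: "flabels f \<subseteq> \<Sigma>" and aY: "[(a, Y)] \<in> lpaths \<kappa> f"
  obtains U where "flabels U \<subseteq> \<Sigma>" "\<kappa> U = Y"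
    "\<And>p. p \<noteq> [] \<Longrightarrow> (a, Y) # p \<in> lpaths \<kappa> f \<Longrightarrow> p \<in> lpaths \<kappa> U"
    "eval_forest A \<sigma> f = hadd A (eval_tree A \<sigma> (Node a U)) (eval_forest A \<sigma> f)"
proof -
  define Es where "Es = ffilter (\<lambda>E. Node a E |\<in>| f \<and> \<kappa> E = Y) (fimage children f)"
  define U where "U = ffUnion Es"
  have Es_iff: "E |\<in>| Es \<longleftrightarrow> Node a E |\<in>| f \<and> \<kappa> E = Y" for E
    by (force simp: Es_def)
  have Es: "flabels E \<subseteq> \<Sigma> \<and> \<kappa> E = Y" if "E |\<in>| Es" for E
    using that f tlabels_subset_flabels[of "Node a E" f] by (auto simp: Es_iff)
  have T_f: "fimage (Node a) Es |\<subseteq>| f"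
    by (auto simp: Es_iff)
  obtain E where "Node a E |\<in>| f" "\<kappa> E = Y"
    using aY by (auto simp: lpaths_Cons_iff)
  then have "Es \<noteq> {||}" and a: "a \<in> \<Sigma>"
    using f tlabels_subset_flabels[of "Node a E" f] by (auto simp: Es_iff)
  then have merged: "eval_forest A \<sigma> (fimage (Node a) Es) = eval_tree A \<sigma> (Node a U)" "\<kappa> U = Y"
    using eval_forest_Node_ffUnion[OF a _ Es] by (simp_all add: U_def)
  have "eval_forest A \<sigma> f = eval_forest A \<sigma> (fimage (Node a) Es |\<union>| f)"
    using T_f by (simp add: funion_absorb1)
  also have "\<dots> = hadd A (eval_tree A \<sigma> (Node a U)) (eval_forest A \<sigma> f)"
    using flabels_mono[OF T_f] f merged by (simp add: eval_forest_union)
  finally show thesis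
  proof (rule that[rotated 3])
    show "flabels U \<subseteq> \<Sigma>" "\<kappa> U = Y"
      using Es merged(2) by (auto simp: U_def flabels_ffUnion)
    show "p \<in> lpaths \<kappa> U" if "p \<noteq> []" "(a, Y) # p \<in> lpaths \<kappa> f" for p
      using that by (auto simp: lpaths_Cons_iff U_def lpaths_ffUnion Es_iff)
  qed
qed

lemma eval_forest_union_absorb:
  assumes absorb: "\<And>t f. t |\<in>| g \<Longrightarrow> flabels f \<subseteq> \<Sigma> \<Longrightarrow> lpaths_tree \<kappa> t \<subseteq> lpaths \<kappa> f \<Longrightarrow>
      eval_forest A \<sigma> (finsert t f) = eval_forest A \<sigma> f"
    and f: "flabels f \<subseteq> \<Sigma>" and g: "flabels g \<subseteq> \<Sigma>" and g_f: "lpaths \<kappa> g \<subseteq> lpaths \<kappa> f"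
  shows "eval_forest A \<sigma> (f |\<union>| g) = eval_forest A \<sigma> f"
proof -
  have "eval_forest A \<sigma> (f |\<union>| g') = eval_forest A \<sigma> f" if "g' |\<subseteq>| g" for g'
    using that
  proof (induction g' rule: fset_induct)
    case (insert t g')
    have "flabels (f |\<union>| g') \<subseteq> \<Sigma>"
      using f g flabels_mono[of g' g] insert.prems by auto
    moreover have "lpaths_tree \<kappa> t \<subseteq> lpaths \<kappa> (f |\<union>| g')"
      using g_f insert.prems by (auto simp: lpaths_def)
    ultimately show ?case
      using absorb[of t "f |\<union>| g'"] insert by simp
  qed simp
  then show ?thesis by simp
qed

lemma eval_forest_finsert_absorb:
  "tlabels t \<subseteq> \<Sigma> \<Longrightarrow> flabels f \<subseteq> \<Sigma> \<Longrightarrow> lpaths_tree \<kappa> t \<subseteq> lpaths \<kappa> f \<Longrightarrow>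
    eval_forest A \<sigma> (finsert t f) = eval_forest A \<sigma> f"
proof (induction t arbitrary: f)
  case (Node a D)
  have a: "a \<in> \<Sigma>" and D: "flabels D \<subseteq> \<Sigma>"
    using Node.prems(1) by auto
  obtain U where U: "flabels U \<subseteq> \<Sigma>" "\<kappa> U = \<kappa> D"
    and D_U: "\<And>p. p \<noteq> [] \<Longrightarrow> (a, \<kappa> D) # p \<in> lpaths \<kappa> f \<Longrightarrow> p \<in> lpaths \<kappa> U"
    and f_U: "eval_forest A \<sigma> f = hadd A (eval_tree A \<sigma> (Node a U)) (eval_forest A \<sigma> f)"
    using eval_forest_merge_siblings[OF Node.prems(2)] Node.prems(3)
    by (auto simp: lpaths_tree_Node)
  have D_U_lpaths: "lpaths \<kappa> D \<subseteq> lpaths \<kappa> U"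
  proof
    fix p assume p: "p \<in> lpaths \<kappa> D"
    then have "(a, \<kappa> D) # p \<in> lpaths \<kappa> f"
      using Node.prems(3) by (auto simp: lpaths_tree_Node)
    moreover have "p \<noteq> []"
      using p Nil_notin_lpaths by metis
    ultimately show "p \<in> lpaths \<kappa> U"
      using D_U by blast
  qed
  have "eval_forest A \<sigma> (U |\<union>| D) = eval_forest A \<sigma> U"
  proof (rule eval_forest_union_absorb[OF _ U(1) D D_U_lpaths])
    fix d g assume d: "d |\<in>| D" and "flabels g \<subseteq> \<Sigma>" "lpaths_tree \<kappa> d \<subseteq> lpaths \<kappa> g"
    moreover have "tlabels d \<subseteq> \<Sigma>"
      using tlabels_subset_flabels[OF d] D by blast
    ultimately show "eval_forest A \<sigma> (finsert d g) = eval_forest A \<sigma> g"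
      using Node.IH by simp
  qed
  then have node:
    "hadd A (eval_tree A \<sigma> (Node a D)) (eval_tree A \<sigma> (Node a U)) = eval_tree A \<sigma> (Node a U)"
    using act_hadd_same_type[OF a D U(1)] U(2)
    by (simp add: eval_tree_Node eval_forest_union D U(1) funion_commute)
  have "eval_forest A \<sigma> (finsert (Node a D) f)
      = hadd A (eval_tree A \<sigma> (Node a D)) (eval_forest A \<sigma> f)"
    using Node.prems(1,2) by (rule eval_forest_finsert)
  also have "\<dots> = hadd A (hadd A (eval_tree A \<sigma> (Node a D)) (eval_tree A \<sigma> (Node a U)))
      (eval_forest A \<sigma> f)"
    using a D U(1) Node.prems(2) by (subst f_U) (simp add: hadd_assoc)
  also have "\<dots> = eval_forest A \<sigma> f"
    using node f_U by simp
  finally show ?case .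
qed

lemma eval_forest_lpaths_eq:
  assumes "flabels f \<subseteq> \<Sigma>" "flabels g \<subseteq> \<Sigma>" "lpaths \<kappa> f = lpaths \<kappa> g"
  shows "eval_forest A \<sigma> f = eval_forest A \<sigma> g"
proof -
  have absorb: "eval_forest A \<sigma> (f |\<union>| g) = eval_forest A \<sigma> f"
    if "flabels f \<subseteq> \<Sigma>" "flabels g \<subseteq> \<Sigma>" "lpaths \<kappa> g \<subseteq> lpaths \<kappa> f" for f g
  proof (rule eval_forest_union_absorb[OF _ that])
    fix t h assume "t |\<in>| g" "flabels h \<subseteq> \<Sigma>" "lpaths_tree \<kappa> t \<subseteq> lpaths \<kappa> h"
    moreover have "tlabels t \<subseteq> \<Sigma>"
      using tlabels_subset_flabels[OF \<open>t |\<in>| g\<close>] that(2) by blast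
    ultimately show "eval_forest A \<sigma> (finsert t h) = eval_forest A \<sigma> h"
      using eval_forest_finsert_absorb by blast
  qed
  show ?thesis
    using absorb[of f g] absorb[of g f] assms by (simp add: funion_commute)
qed

end

lemma lpaths_const: "lpaths (\<lambda>_. c) f = map (\<lambda>a. (a, c)) ` paths f"
proof -
  have tree: "lpaths_tree (\<lambda>_. c) t = map (\<lambda>a. (a, c)) ` tpaths t" for t
  proof (induction t)
    case (Node a C)
    then have "lpaths (\<lambda>_. c) C = map (\<lambda>a. (a, c)) ` paths C"
      unfolding lpaths_def paths_def image_UN by (simp cong: SUP_cong)
    then show ?case
      by (simp add: lpaths_tree_Node tpaths_Node image_image)
  qed
  show ?thesis
    by (simp add: lpaths_def paths_def image_UN tree)
qed

lemma (in forest_eval) eval_forest_paths_eq_if_distributive: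
  assumes "distributive A" "flabels f \<subseteq> \<Sigma>" "flabels g \<subseteq> \<Sigma>" "paths f = paths g"
  shows "eval_forest A \<sigma> f = eval_forest A \<sigma> g"
proof -
  interpret typewise_distributive A \<Sigma> \<sigma> "\<lambda>_. ()"
  proof unfold_locales
    fix a E1 E2 assume "a \<in> \<Sigma>" "flabels E1 \<subseteq> \<Sigma>" "flabels E2 \<subseteq> \<Sigma>"
    then show "act A (\<sigma> a) (hadd A (eval_forest A \<sigma> E1) (eval_forest A \<sigma> E2)) =
        hadd A (act A (\<sigma> a) (eval_forest A \<sigma> E1)) (act A (\<sigma> a) (eval_forest A \<sigma> E2))"
      using \<open>distributive A\<close> by (simp add: distributive_def)
  qed
  show ?thesis
    by (rule eval_forest_lpaths_eq[OF assms(2,3)]) (simp add: lpaths_const assms(4))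
qed

section \<open>Two-distributivity of wreath products and of their divisors\<close>

lemma paths_fill_cong: "paths f = paths g \<Longrightarrow> paths (fill c f) = paths (fill c g)"
  by (induction c) (auto simp: tpaths_Node)

lemma (in forest_eval) eval_forest_fill_union_if_letterwise:
  assumes letterwise: "\<And>a E1 E2. a \<in> \<Sigma> \<Longrightarrow> flabels E1 \<subseteq> \<Sigma> \<Longrightarrow> flabels E2 \<subseteq> \<Sigma> \<Longrightarrow>
      paths E1 = paths E2 \<Longrightarrow>
      act A (\<sigma> a) (hadd A (eval_forest A \<sigma> E1) (eval_forest A \<sigma> E2)) =
      hadd A (act A (\<sigma> a) (eval_forest A \<sigma> E1)) (act A (\<sigma> a) (eval_forest A \<sigma> E2))"
    and f: "flabels f1 \<subseteq> \<Sigma>" "flabels f2 \<subseteq> \<Sigma>" "paths f1 = paths f2"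
  shows "clabels v \<subseteq> \<Sigma> \<Longrightarrow>
    eval_forest A \<sigma> (fill v (f1 |\<union>| f2)) = eval_forest A \<sigma> (fill v f1 |\<union>| fill v f2)"
proof (induction v)
  case (CHole F)
  have "fill (CHole F) (f1 |\<union>| f2) = fill (CHole F) f1 |\<union>| fill (CHole F) f2"
    by auto
  then show ?case by simp
next
  case (CNode F a c)
  let ?X = "fill c (f1 |\<union>| f2)" and ?Y1 = "fill c f1" and ?Y2 = "fill c f2"
  have labels: "a \<in> \<Sigma>" "flabels F \<subseteq> \<Sigma>" "flabels ?Y1 \<subseteq> \<Sigma>" "flabels ?Y2 \<subseteq> \<Sigma>"
    using CNode.prems f by auto
  have "eval_forest A \<sigma> ?X = hadd A (eval_forest A \<sigma> ?Y1) (eval_forest A \<sigma> ?Y2)"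
    using CNode labels by (simp add: eval_forest_union)
  moreover have "paths ?Y1 = paths ?Y2"
    using f(3) by (rule paths_fill_cong)
  ultimately have node: "eval_tree A \<sigma> (Node a ?X) =
      hadd A (eval_tree A \<sigma> (Node a ?Y1)) (eval_tree A \<sigma> (Node a ?Y2))"
    using letterwise labels by (simp add: eval_tree_Node)
  have "fill (CNode F a c) f1 |\<union>| fill (CNode F a c) f2
      = finsert (Node a ?Y1) (finsert (Node a ?Y2) F)"
    by auto
  then show ?case
    using labels node by (simp add: eval_forest_finsert hadd_assoc)
qed

lemma wreath_act_hadd_same_snd:
  assumes "forest_algebra G2" "distributive G1" "x \<in> Vc (wreath G1 G2)"
    "p1 \<in> Hc G1" "p2 \<in> Hc G1" "q \<in> Hc G2"
  shows "act (wreath G1 G2) x (hadd (wreath G1 G2) (p1, q) (p2, q)) =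
    hadd (wreath G1 G2) (act (wreath G1 G2) x (p1, q)) (act (wreath G1 G2) x (p2, q))"
proof -
  interpret G2: forest_alg G2 by (rule forest_alg.intro) fact
  obtain g u where "x = (g, u)" "g q \<in> Vc G1" "u \<in> Vc G2"
    using assms(3,6) by (cases x) auto
  then show ?thesis
    using assms(2,4-) by (simp add: distributive_def)
qed

lemma eval_forest_wreath_snd:
  assumes "forest_algebra G1" "forest_algebra G2" "\<sigma> ` \<Sigma> \<subseteq> Vc (wreath G1 G2)" "flabels f \<subseteq> \<Sigma>"
  shows "snd (eval_forest (wreath G1 G2) \<sigma> f) = eval_forest G2 (\<lambda>a. snd (\<sigma> a)) f"
proof -
  interpret W: forest_alg "wreath G1 G2"
    using assms(1,2) by (intro forest_alg.intro forest_algebra_wreath)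
  show ?thesis
    using W.eval_forest_morphism[OF morphism_wreath_snd assms(2-)] .
qed

lemma two_distributive_wreath:
  assumes FA: "forest_algebra G1" "forest_algebra G2"
    and dist: "distributive G1" "distributive G2"
  shows "two_distributive (wreath G1 G2)"
proof (rule two_distributiveI[OF forest_algebra_wreath[OF FA]])
  let ?W = "wreath G1 G2"
  fix \<Sigma> :: "nat set" and \<sigma> v f1 f2
  assume \<sigma>: "\<sigma> ` \<Sigma> \<subseteq> Vc ?W" and labels: "clabels v \<subseteq> \<Sigma>" "flabels f1 \<subseteq> \<Sigma>" "flabels f2 \<subseteq> \<Sigma>"
    and paths: "paths f1 = paths f2"
  interpret W: forest_eval ?W \<Sigma> \<sigma>
    using forest_algebra_wreath[OF FA] \<sigma> by unfold_locales
  interpret G2: forest_eval G2 \<Sigma> "\<lambda>a. snd (\<sigma> a)"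
    using FA(2) \<sigma> by unfold_locales auto
  show "eval_forest ?W \<sigma> (fill v (f1 |\<union>| f2)) = eval_forest ?W \<sigma> (fill v f1 |\<union>| fill v f2)"
  proof (rule W.eval_forest_fill_union_if_letterwise[OF _ labels(2,3) paths labels(1)])
    fix a E1 E2 assume a: "a \<in> \<Sigma>" and E: "flabels E1 \<subseteq> \<Sigma>" "flabels E2 \<subseteq> \<Sigma>" "paths E1 = paths E2"
    obtain p1 q1 p2 q2
      where E1: "eval_forest ?W \<sigma> E1 = (p1, q1)" and E2: "eval_forest ?W \<sigma> E2 = (p2, q2)"
      by fastforce
    have "q1 = q2"
      using eval_forest_wreath_snd[OF FA \<sigma> E(1)] eval_forest_wreath_snd[OF FA \<sigma> E(2)]
        G2.eval_forest_paths_eq_if_distributive[OF dist(2) E] E1 E2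
      by simp
    moreover have "p1 \<in> Hc G1" "p2 \<in> Hc G1" "q1 \<in> Hc G2"
      using W.eval_forest_closed[OF E(1)] W.eval_forest_closed[OF E(2)] E1 E2 by auto
    ultimately show "act ?W (\<sigma> a) (hadd ?W (eval_forest ?W \<sigma> E1) (eval_forest ?W \<sigma> E2)) =
        hadd ?W (act ?W (\<sigma> a) (eval_forest ?W \<sigma> E1)) (act ?W (\<sigma> a) (eval_forest ?W \<sigma> E2))"
      using wreath_act_hadd_same_snd[OF FA(2) dist(1) W.valuation_in_Vc[OF a]] E1 E2 by simp
  qed
qed

lemma two_distributive_divides:
  assumes F: "forest_algebra F" and W: "forest_algebra W" and td: "two_distributive W"
    and "divides F W"
  shows "two_distributive F"
proof (rule two_distributiveI[OF F])
  fix \<Sigma> :: "nat set" and \<tau> v f1 f2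
  assume \<tau>: "\<tau> ` \<Sigma> \<subseteq> Vc F" and labels: "clabels v \<subseteq> \<Sigma>" "flabels f1 \<subseteq> \<Sigma>" "flabels f2 \<subseteq> \<Sigma>"
    and paths: "paths f1 = paths f2"
  obtain H V \<theta> \<chi> where sub: "is_subalgebra W H V" and hom: "morphism (restrict_alg W H V) F \<theta> \<chi>"
    and "\<theta> ` H = Hc F" and onto_V: "\<chi> ` V = Vc F"
    by (rule divides_obtains_surjective_morphism[OF \<open>divides F W\<close>])
  have "\<forall>a\<in>\<Sigma>. \<exists>x. x \<in> V \<and> \<chi> x = \<tau> a"
  proof
    fix a assume "a \<in> \<Sigma>"
    then have "\<tau> a \<in> \<chi> ` V"
      using \<tau> onto_V by auto
    then show "\<exists>x. x \<in> V \<and> \<chi> x = \<tau> a"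
      by auto
  qed
  then obtain \<sigma> where \<sigma>: "\<forall>a\<in>\<Sigma>. \<sigma> a \<in> V \<and> \<chi> (\<sigma> a) = \<tau> a"
    using bchoice[of \<Sigma> "\<lambda>a x. x \<in> V \<and> \<chi> x = \<tau> a"] by blast
  then have \<sigma>_V: "\<sigma> ` \<Sigma> \<subseteq> V" and \<sigma>_W: "\<sigma> ` \<Sigma> \<subseteq> Vc W"
    using is_subalgebraD(2)[OF sub] by auto
  have lift: "eval_forest F \<tau> f = \<theta> (eval_forest W \<sigma> f)" if "flabels f \<subseteq> \<Sigma>" for f
  proof -
    have "\<theta> (eval_forest W \<sigma> f) = eval_forest F (\<lambda>a. \<chi> (\<sigma> a)) f"
      by (rule forest_alg.eval_forest_morphism_subalgebra[OF forest_alg.intro[OF W] sub hom F \<sigma>_V that])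
    also have "\<dots> = eval_forest F \<tau> f"
      using that \<sigma> by (intro eval_forest_cong) auto
    finally show ?thesis by simp
  qed
  have "eval_forest W \<sigma> (fill v (f1 |\<union>| f2)) = eval_forest W \<sigma> (fill v f1 |\<union>| fill v f2)"
    using two_distributive_eval[OF W td \<sigma>_W labels paths] .
  then show "eval_forest F \<tau> (fill v (f1 |\<union>| f2)) = eval_forest F \<tau> (fill v f1 |\<union>| fill v f2)"
    using labels by (simp add: lift)
qed

section \<open>The free distributive forest algebra\<close>

text \<open>Forests are represented by their sets of root paths, a context by the set of paths
  avoiding the hole together with the word leading to the hole.\<close>

definition path_algebra :: "('c list fset, 'c list fset \<times> 'c list) falg" where
  "path_algebra =
     \<lparr> Hc = UNIV, Vc = UNIV, hadd = (|\<union>|), hzero = {||},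
       vmul = (\<lambda>(Q, w) (Q', w'). (Q |\<union>| fimage ((@) w) Q', w @ w')), vone = ({||}, []),
       act = (\<lambda>(Q, w) X. Q |\<union>| fimage ((@) w) X), ins = (\<lambda>X. (X, [])) \<rparr>"

lemma path_algebra_simps [simp]:
  "Hc path_algebra = UNIV" "Vc path_algebra = UNIV" "hadd path_algebra X Y = X |\<union>| Y"
  "hzero path_algebra = {||}" "vone path_algebra = ({||}, [])"
  "vmul path_algebra (Q, w) (Q', w') = (Q |\<union>| fimage ((@) w) Q', w @ w')"
  "act path_algebra (Q, w) X = Q |\<union>| fimage ((@) w) X" "ins path_algebra X = (X, [])"
  by (simp_all add: path_algebra_def)

lemma ex_append_replicate_notin: "finite Q \<Longrightarrow> \<exists>n. w @ replicate n c \<notin> Q"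
proof (rule ccontr)
  assume "finite Q" "\<nexists>n. w @ replicate n c \<notin> Q"
  then have "finite (range (\<lambda>n. w @ replicate n c))"
    by (auto intro: finite_subset)
  moreover have "inj (\<lambda>n. w @ replicate n c)"
    by (rule injI) simp
  ultimately show False
    using finite_imageD by blast
qed

lemma forest_algebra_path_algebra: "forest_algebra path_algebra"
proof -
  have faithful: "\<forall>v\<in>Vc path_algebra. \<forall>v'\<in>Vc path_algebra.
      (\<forall>X\<in>Hc path_algebra. act path_algebra v X = act path_algebra v' X) \<longrightarrow>
      v = (v' :: 'c list fset \<times> 'c list)"
  proof (intro ballI impI)
    fix v v' :: "'c list fset \<times> 'c list"
    assume "\<forall>X\<in>Hc path_algebra. act path_algebra v X = act path_algebra v' X"
    then have act_eq: "act path_algebra v X = act path_algebra v' X" for X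
      by simp
    obtain Q w Q' w' where v: "v = (Q, w)" "v' = (Q', w')"
      by fastforce
    have "Q = Q'"
      using act_eq[of "{||}"] by (simp add: v)
    obtain n where n: "w @ replicate n undefined |\<notin>| Q"
      using ex_append_replicate_notin[of "fset Q" w undefined] by auto
    have "finsert (w @ replicate n undefined) Q = finsert (w' @ replicate n undefined) Q'"
      using act_eq[of "{|replicate n undefined|}"] by (simp add: v)
    then have "w @ replicate n undefined |\<in>| finsert (w' @ replicate n undefined) Q'"
      by (metis finsertI1)
    then have "w = w'"
      using n \<open>Q = Q'\<close> by auto
    then show "v = v'"
      using \<open>Q = Q'\<close> v by simp
  qed
  have append_assoc': "((@) (u @ w) :: 'c list \<Rightarrow> _) = (\<lambda>x. u @ w @ x)" for u w
    by (simp add: fun_eq_iff)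
  show ?thesis
    unfolding forest_algebra_def
    by (intro conjI faithful)
      (auto simp: funion_assoc funion_left_commute fimage_funion fimage_fimage comp_def
        append_assoc' fset.map_ident_strong intro: exI[of _ "(_, [])"])
qed

lemma distributive_path_algebra: "distributive path_algebra"
  by (auto simp: distributive_def fimage_funion)

definition path_letter :: "'c \<Rightarrow> 'c list fset \<times> 'c list" where
  "path_letter c = ({|[c]|}, [c])"

lemma act_path_letter: "act path_algebra (path_letter c) X = finsert [c] (fimage ((#) c) X)"
proof -
  have "(@) [c] = (#) c"
    by (simp add: fun_eq_iff)
  then show ?thesis
    by (simp add: path_letter_def)
qed

definition path_fset :: "'a forest \<Rightarrow> 'a list fset" where
  "path_fset = eval_forest path_algebra path_letter"

interpretation path_eval: forest_eval path_algebra UNIV path_letter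
  by unfold_locales (simp_all add: forest_algebra_path_algebra)

lemma path_fset_union: "path_fset (f |\<union>| g) = path_fset f |\<union>| path_fset g"
  by (simp add: path_fset_def path_eval.eval_forest_union)

lemma path_fset_Node: "path_fset {|Node a C|} = act path_algebra (path_letter a) (path_fset C)"
  by (simp add: path_fset_def path_eval.eval_forest_Node)

lemma fset_path_fset: "fset (path_fset f) = paths f"
proof (induction f rule: forest_induct)
  case empty
  then show ?case by (simp add: path_fset_def paths_def)
next
  case (insert t f)
  then show ?case
    using path_fset_union[of "{|t|}" f] by simp
next
  case (Node a C)
  then show ?case
    by (simp add: path_fset_Node act_path_letter tpaths_Node paths_def)
qed

lemma two_distributive_eval_lpaths_eq:
  assumes F: "forest_algebra F" and td: "two_distributive F" and \<sigma>: "\<sigma> ` \<Sigma> \<subseteq> Vc F"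
    and "flabels f \<subseteq> \<Sigma>" "flabels g \<subseteq> \<Sigma>" "lpaths path_fset f = lpaths path_fset g"
  shows "eval_forest F \<sigma> f = eval_forest F \<sigma> g"
proof -
  interpret typewise_distributive F \<Sigma> \<sigma> path_fset
  proof unfold_locales
    fix a E1 E2 assume a: "a \<in> \<Sigma>" and E: "flabels E1 \<subseteq> \<Sigma>" "flabels E2 \<subseteq> \<Sigma>"
      and "path_fset E1 = path_fset E2"
    then have "paths E1 = paths E2"
      by (metis fset_path_fset)
    with a E show "act F (\<sigma> a) (hadd F (eval_forest F \<sigma> E1) (eval_forest F \<sigma> E2)) =
        hadd F (act F (\<sigma> a) (eval_forest F \<sigma> E1)) (act F (\<sigma> a) (eval_forest F \<sigma> E2))"
      by (rule two_distributive_act_hadd[OF F td \<sigma>])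
  qed (simp_all add: F \<sigma> path_fset_union)
  show ?thesis
    using eval_forest_lpaths_eq assms(4-) .
qed

section \<open>Serialising finite structures\<close>

datatype 'v sexp = Atom 'v | List "'v sexp list"

text \<open>A prefix-free code: \<open>Inl\<close> announces an atom or the next list element, and the letter
  \<open>Inr undefined\<close> opens and closes lists.\<close>

fun serialize :: "'v sexp \<Rightarrow> ('h + 'v) list" where
  "serialize (Atom v) = [Inl undefined, Inr v]"
| "serialize (List xs) =
     Inr undefined # concat (map (\<lambda>x. Inl undefined # serialize x) xs) @ [Inr undefined]"

lemma serialize_list_prefix:
  fixes r s :: "('h + 'v) list"
  assumes "\<And>x. x \<in> set xs \<Longrightarrow>
    \<forall>y (r :: ('h + 'v) list) s. serialize x @ r = serialize y @ s \<longrightarrow> x = y \<and> r = s"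
    and "concat (map (\<lambda>x. Inl undefined # serialize x) xs) @ Inr undefined # r =
      concat (map (\<lambda>x. Inl undefined # serialize x) ys) @ Inr undefined # s"
  shows "xs = ys \<and> r = s"
  using assms
proof (induction xs arbitrary: ys)
  case Nil
  then show ?case by (cases ys) auto
next
  case (Cons x xs)
  obtain y ys' where ys: "ys = y # ys'"
    using Cons.prems(2) by (cases ys) simp_all
  with Cons.prems(2) have
    "serialize x @ (concat (map (\<lambda>x. Inl undefined # serialize x) xs) @ Inr undefined # r) =
      serialize y @ (concat (map (\<lambda>x. Inl undefined # serialize x) ys') @ Inr undefined # s)"
    by simp
  moreover have "\<forall>y (r :: ('h + 'v) list) s. serialize x @ r = serialize y @ s \<longrightarrow> x = y \<and> r = s"
    by (rule Cons.prems(1)) simp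
  ultimately have "x = y"
    and rest: "concat (map (\<lambda>x. Inl undefined # serialize x) xs) @ Inr undefined # r =
      concat (map (\<lambda>x. Inl undefined # serialize x) ys') @ Inr undefined # s"
    by blast+
  then show ?case
    using Cons.IH[OF _ rest] Cons.prems(1) ys by auto
qed

lemma serialize_prefix:
  fixes r s :: "('h + 'v) list"
  shows "serialize x @ r = serialize y @ s \<Longrightarrow> x = y \<and> r = s"
proof (induction x arbitrary: y r s)
  case (Atom v)
  then show ?case by (cases y) auto
next
  case (List xs)
  have IH: "\<forall>y (r :: ('h + 'v) list) s. serialize x @ r = serialize y @ s \<longrightarrow> x = y \<and> r = s"
    if "x \<in> set xs" for x
    using List.IH[OF that] by blast
  show ?case
  proof (cases y)
    case (List ys)
    then have "concat (map (\<lambda>x. Inl undefined # serialize x) xs) @ Inr undefined # r =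
        concat (map (\<lambda>x. Inl undefined # serialize x) ys) @ Inr undefined # s"
      using \<open>serialize (sexp.List xs) @ r = serialize y @ s\<close> by simp
    then have "xs = ys \<and> r = s"
      by (rule serialize_list_prefix[rotated]) (rule IH)
    then show ?thesis
      using \<open>y = sexp.List ys\<close> by simp
  qed (use List.prems in simp)
qed

lemma inj_serialize: "inj serialize"
  by (rule injI) (use serialize_prefix[where r = "[]" and s = "[]"] in auto)

definition list_code :: "('a \<Rightarrow> 'v sexp) \<Rightarrow> 'a list \<Rightarrow> 'v sexp" where
  "list_code e xs = List (map e xs)"

definition fset_code :: "('a \<Rightarrow> 'v sexp) \<Rightarrow> 'a fset \<Rightarrow> 'v sexp" where
  "fset_code e X = list_code e (SOME xs. set xs = fset X)"

definition pair_code :: "('a \<Rightarrow> 'v sexp) \<Rightarrow> ('b \<Rightarrow> 'v sexp) \<Rightarrow> 'a \<times> 'b \<Rightarrow> 'v sexp" where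
  "pair_code e1 e2 p = List [e1 (fst p), e2 (snd p)]"

lemma inj_list_code: "inj e \<Longrightarrow> inj (list_code e)"
  by (rule injI) (auto simp: list_code_def dest: inj_map_eq_map[THEN iffD1, rotated])

lemma inj_fset_code: "inj e \<Longrightarrow> inj (fset_code e)"
proof (rule injI)
  fix X Y assume "inj e" and "fset_code e X = fset_code e Y"
  then have "(SOME xs. set xs = fset X) = (SOME xs. set xs = fset Y)"
    by (auto simp: fset_code_def dest: injD[OF inj_list_code])
  moreover have "set (SOME xs. set xs = fset Z) = fset Z" for Z :: "'a fset"
    by (rule someI_ex) (simp add: finite_list)
  ultimately show "X = Y"
    by (metis fset_inject)
qed

lemma inj_pair_code: "inj e1 \<Longrightarrow> inj e2 \<Longrightarrow> inj (pair_code e1 e2)"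
  by (rule injI) (auto simp: pair_code_def dest: injD intro: prod_eqI)

definition path_code :: "('c \<Rightarrow> 'v sexp) \<Rightarrow> 'c list fset \<Rightarrow> ('h + 'v) list" where
  "path_code e = serialize \<circ> fset_code (list_code e)"

definition path_ctx_code :: "('c \<Rightarrow> 'v sexp) \<Rightarrow> 'c list fset \<times> 'c list \<Rightarrow> ('h + 'v) list" where
  "path_ctx_code e = serialize \<circ> pair_code (fset_code (list_code e)) (list_code e)"

definition path_code_algebra :: "('c \<Rightarrow> 'v sexp) \<Rightarrow> (('h + 'v) list, ('h + 'v) list) falg" where
  "path_code_algebra e = transport path_algebra (path_code e) (path_ctx_code e)"

lemma inj_path_code: "inj e \<Longrightarrow> inj (path_code e)"
  and inj_path_ctx_code: "inj e \<Longrightarrow> inj (path_ctx_code e)"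
  unfolding path_code_def path_ctx_code_def
  by (intro inj_compose inj_serialize inj_fset_code inj_list_code inj_pair_code; assumption)+

lemma forest_algebra_path_code_algebra: "inj e \<Longrightarrow> forest_algebra (path_code_algebra e)"
  and distributive_path_code_algebra: "inj e \<Longrightarrow> distributive (path_code_algebra e)"
  unfolding path_code_algebra_def
  by (simp_all add: forest_algebra_transport distributive_transport forest_algebra_path_algebra
      distributive_path_algebra inj_path_code inj_path_ctx_code)

lemma path_code_algebra_simps:
  assumes "inj e"
  shows "Hc (path_code_algebra e) = range (path_code e)"
    "Vc (path_code_algebra e) = range (path_ctx_code e)"
    "hzero (path_code_algebra e) = path_code e {||}"
    "hadd (path_code_algebra e) (path_code e X) (path_code e Y) = path_code e (X |\<union>| Y)"
    "act (path_code_algebra e) (path_ctx_code e g) (path_code e X)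
      = path_code e (act path_algebra g X)"
  using transport_simps[of "path_code e" path_algebra "path_ctx_code e"]
  by (simp_all add: path_code_algebra_def inj_path_code inj_path_ctx_code assms)

section \<open>Two-distributive algebras divide a wreath product of path algebras\<close>

definition labelled_code :: "'v \<times> 'v list fset \<Rightarrow> 'v sexp" where
  "labelled_code = pair_code Atom (fset_code (list_code Atom))"

lemma inj_Atom: "inj Atom"
  by (simp add: inj_def)

lemma inj_labelled_code: "inj labelled_code"
  unfolding labelled_code_def by (intro inj_pair_code inj_fset_code inj_list_code inj_Atom)

text \<open>On the second factor the letter \<open>a\<close> acts as the path letter \<open>a\<close>; on the first factor it
  acts as the path letter \<open>(a, Y)\<close>, where \<open>Y\<close> is the path set of the children as computed by
  the second factor.\<close>

definition labelled_path_letter :: "'v \<Rightarrow> (('h + 'v) list \<Rightarrow> ('h + 'v) list) \<times> ('h + 'v) list" where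
  "labelled_path_letter a =
     ((\<lambda>Y\<in>range (path_code Atom).
        path_ctx_code labelled_code (path_letter (a, inv (path_code Atom) Y))),
      path_ctx_code Atom (path_letter a))"

abbreviation path_wreath :: "(('h + 'v) list \<times> ('h + 'v) list,
    (('h + 'v) list \<Rightarrow> ('h + 'v) list) \<times> ('h + 'v) list) falg" where
  "path_wreath \<equiv> wreath (path_code_algebra labelled_code) (path_code_algebra Atom)"

lemma forest_algebra_path_wreath: "forest_algebra path_wreath"
  by (intro forest_algebra_wreath forest_algebra_path_code_algebra inj_Atom inj_labelled_code)

lemma labelled_path_letter_closed: "labelled_path_letter a \<in> Vc path_wreath"
  by (auto simp: labelled_path_letter_def path_code_algebra_simps[OF inj_Atom]
      path_code_algebra_simps[OF inj_labelled_code])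

lemma eval_forest_path_wreath:
  "\<exists>X. eval_forest path_wreath labelled_path_letter f
      = (path_code labelled_code X, path_code Atom (path_fset f) :: ('h + 'v) list)
      \<and> fset X = lpaths path_fset f"
proof -
  note simps = path_code_algebra_simps[OF inj_Atom] path_code_algebra_simps[OF inj_labelled_code]
  interpret W: forest_eval "path_wreath :: (('h + 'v) list \<times> _, _) falg" UNIV labelled_path_letter
    by (intro forest_evalI forest_algebra_path_wreath image_subsetI labelled_path_letter_closed)
  show ?thesis
  proof (induction f rule: forest_induct)
    case empty
    show ?case
      by (rule exI[of _ "{||}"]) (simp add: simps path_fset_def lpaths_def)
  next
    case (insert t f)
    then obtain X1 X2 where
      "eval_forest path_wreath labelled_path_letter {|t|}
        = (path_code labelled_code X1, path_code Atom (path_fset {|t|}) :: ('h + 'v) list)"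
      "fset X1 = lpaths path_fset {|t|}"
      "eval_forest path_wreath labelled_path_letter f
        = (path_code labelled_code X2, path_code Atom (path_fset f) :: ('h + 'v) list)"
      "fset X2 = lpaths path_fset f"
      by blast
    then show ?case
      using W.eval_forest_union[of "{|t|}" f] path_fset_union[of "{|t|}" f]
      by (intro exI[of _ "X1 |\<union>| X2"]) (simp add: simps lpaths_def)
  next
    case (Node a C)
    then obtain X where X: "fset X = lpaths path_fset C"
      "eval_forest path_wreath labelled_path_letter C
        = (path_code labelled_code X, path_code Atom (path_fset C) :: ('h + 'v) list)"
      by blast
    have "eval_forest (path_wreath :: (('h + 'v) list \<times> _, _) falg) labelled_path_letter
        {|Node a C|} = act path_wreath (labelled_path_letter a) (eval_forest path_wreath labelled_path_letter C)"
      by (simp add: W.eval_forest_Node)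
    also have "\<dots> = (path_code labelled_code (act path_algebra (path_letter (a, path_fset C)) X),
        path_code Atom (path_fset {|Node a C|}))"
      using X(2)
      by (simp add: simps labelled_path_letter_def path_fset_Node
          inv_f_f[OF inj_path_code[OF inj_Atom]])
    finally show ?case
      using X(1) by (intro exI[of _ "act path_algebra (path_letter (a, path_fset C)) X"])
        (simp add: act_path_letter lpaths_tree_Node lpaths_def)
  qed
qed

lemma lpaths_eq_if_eval_path_wreath_eq:
  assumes "eval_forest (path_wreath :: (('h + 'v) list \<times> _, _) falg) labelled_path_letter f
    = eval_forest path_wreath labelled_path_letter g"
  shows "lpaths path_fset f = lpaths path_fset g"
proof -
  obtain X where X: "fset X = lpaths path_fset f"
    "eval_forest path_wreath labelled_path_letter f
      = (path_code labelled_code X, path_code Atom (path_fset f) :: ('h + 'v) list)"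
    using eval_forest_path_wreath by blast
  obtain Y where Y: "fset Y = lpaths path_fset g"
    "eval_forest path_wreath labelled_path_letter g
      = (path_code labelled_code Y, path_code Atom (path_fset g) :: ('h + 'v) list)"
    using eval_forest_path_wreath by blast
  have "path_code labelled_code X = (path_code labelled_code Y :: ('h + 'v) list)"
    using assms X(2) Y(2) by simp
  then show ?thesis
    using X(1) Y(1) inj_path_code[OF inj_labelled_code] by (auto dest: injD)
qed

lemma divides_path_wreath:
  fixes F :: "('h, 'v, 'z) falg_scheme"
  assumes F: "forest_algebra F" and td: "two_distributive F"
  shows "divides F (path_wreath :: (('x + 'v) list \<times> _, _) falg)"
proof -
  interpret F: forest_eval F "Vc F" id
    using F by unfold_locales auto
  interpret W: forest_eval "path_wreath :: (('x + 'v) list \<times> _, _) falg" "Vc F" labelled_path_letter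
    by (intro forest_evalI forest_algebra_path_wreath image_subsetI labelled_path_letter_closed)
  show ?thesis
  proof (rule divides_if_kernel_subset[OF is_subalgebra_free_falg F W.morphism_eval F.morphism_eval
        F.image_eval_forest_id F.image_eval_ctx_id])
    fix f g assume "f \<in> Hc (free_falg (Vc F))" "g \<in> Hc (free_falg (Vc F))"
      and "eval_forest path_wreath labelled_path_letter f
        = eval_forest path_wreath labelled_path_letter g"
    then show "eval_forest F id f = eval_forest F id g"
      by (intro two_distributive_eval_lpaths_eq[OF F td F.valuation_closed]
          lpaths_eq_if_eval_path_wreath_eq)
        (simp_all add: free_falg_def)
  qed
qed

theorem mainTheorem4:
  fixes F :: "('h, 'v) falg"
  assumes "forest_algebra F"
  shows "(\<forall>(G1 :: ('a, 'b) falg) (G2 :: ('c, 'd) falg).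
            forest_algebra G1 \<and> forest_algebra G2 \<and> distributive G1 \<and> distributive G2 \<and>
            divides F (wreath G1 G2) \<longrightarrow> two_distributive F)
       \<and> (two_distributive F \<longrightarrow>
           (\<exists>(G1 :: (('h + 'v) list, ('h + 'v) list) falg) (G2 :: (('h + 'v) list, ('h + 'v) list) falg).
              forest_algebra G1 \<and> forest_algebra G2 \<and> distributive G1 \<and> distributive G2 \<and>
              divides F (wreath G1 G2)))"
proof (intro conjI allI impI)
  fix G1 :: "('a, 'b) falg" and G2 :: "('c, 'd) falg"
  assume "forest_algebra G1 \<and> forest_algebra G2 \<and> distributive G1 \<and> distributive G2 \<and>
    divides F (wreath G1 G2)"
  then show "two_distributive F"
    using two_distributive_divides[OF assms forest_algebra_wreath two_distributive_wreath] by blast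
next
  assume "two_distributive F"
  then have "divides F (path_wreath :: (('h + 'v) list \<times> _, _) falg)"
    by (rule divides_path_wreath[OF assms])
  then show "\<exists>(G1 :: (('h + 'v) list, ('h + 'v) list) falg) (G2 :: (('h + 'v) list, ('h + 'v) list) falg).
      forest_algebra G1 \<and> forest_algebra G2 \<and> distributive G1 \<and> distributive G2 \<and>
      divides F (wreath G1 G2)"
    using inj_Atom inj_labelled_code
    by (blast intro: forest_algebra_path_code_algebra distributive_path_code_algebra)
qed

end
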